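(* Let $L>0$, $g\in L^2((0,L)^2;\mathbb{C})$, and let $P:L^2(0,L)\to L^2(0,L)$ be a bounded linear operator such that $P^*(D(A^* ))\subset D(A^* )$ and $P$ is invertible. Then there exists a bounded linear form $\Gamma:L^2(0,L)\to\mathbb{C}$ such that $A_0^*P^*z=P^*A^*z+P^*\Gamma^*B^*z$ for all $z\in D(A^* )$ if and only if $A_0^*P^*z-P^*A^*z=0$ for all $z\in\ker B^*$.
   Context: $D(A^* )=\{z\in H^1(0,L):z(0)=0\}$; $A^*z(x)=-z'(x)+\int_0^L\overline{g(y,x)}z(y)dy$ and $A_0^*z=-z'$, both with domain $D(A^* )$; $B^*:D(A^* )\to\mathbb{C}$, $B^*z=z(L)$, so $\ker B^*=\{z\in H^1(0,L):z(0)=z(L)=0\}$; $\Gamma^*$ is the adjoint of $\Gamma$. *)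

theory Defs
  imports "HOL-Analysis.Analysis"
begin

text \<open>Elements of L2(0,L;C) are represented by functions real => complex;
  equality in L2 is equality almost everywhere on [0,L].\<close>

definition l2 :: "real \<Rightarrow> (real \<Rightarrow> complex) \<Rightarrow> bool" where
  "l2 L f \<longleftrightarrow> f measurable_on {0..L} \<and> (\<lambda>x. (cmod (f x))\<^sup>2) integrable_on {0..L}"

definition l2sq :: "real \<Rightarrow> (real \<times> real \<Rightarrow> complex) \<Rightarrow> bool" where
  "l2sq L g \<longleftrightarrow> g measurable_on ({0..L} \<times> {0..L}) \<and>
     (\<lambda>p. (cmod (g p))\<^sup>2) integrable_on ({0..L} \<times> {0..L})"

definition ae_eq :: "real \<Rightarrow> (real \<Rightarrow> complex) \<Rightarrow> (real \<Rightarrow> complex) \<Rightarrow> bool" where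
  "ae_eq L f g \<longleftrightarrow> negligible {x \<in> {0..L}. f x \<noteq> g x}"

definition l2_inner :: "real \<Rightarrow> (real \<Rightarrow> complex) \<Rightarrow> (real \<Rightarrow> complex) \<Rightarrow> complex" where
  "l2_inner L f g = integral {0..L} (\<lambda>x. f x * cnj (g x))"

definition l2_norm :: "real \<Rightarrow> (real \<Rightarrow> complex) \<Rightarrow> real" where
  "l2_norm L f = sqrt (integral {0..L} (\<lambda>x. (cmod (f x))\<^sup>2))"

definition bounded_op :: "real \<Rightarrow> ((real \<Rightarrow> complex) \<Rightarrow> (real \<Rightarrow> complex)) \<Rightarrow> bool" where
  "bounded_op L P \<longleftrightarrow>
     (\<forall>f. l2 L f \<longrightarrow> l2 L (P f)) \<and>
     (\<forall>f g a b. l2 L f \<and> l2 L g \<longrightarrow>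
        ae_eq L (P (\<lambda>x. a * f x + b * g x)) (\<lambda>x. a * P f x + b * P g x)) \<and>
     (\<exists>C. \<forall>f. l2 L f \<longrightarrow> l2_norm L (P f) \<le> C * l2_norm L f)"

definition invertible_op :: "real \<Rightarrow> ((real \<Rightarrow> complex) \<Rightarrow> (real \<Rightarrow> complex)) \<Rightarrow> bool" where
  "invertible_op L P \<longleftrightarrow> (\<exists>Q. bounded_op L Q \<and>
     (\<forall>f. l2 L f \<longrightarrow> ae_eq L (Q (P f)) f \<and> ae_eq L (P (Q f)) f))"

definition op_adjoint :: "real \<Rightarrow> ((real \<Rightarrow> complex) \<Rightarrow> (real \<Rightarrow> complex))
    \<Rightarrow> ((real \<Rightarrow> complex) \<Rightarrow> (real \<Rightarrow> complex)) \<Rightarrow> bool" where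
  "op_adjoint L P Ps \<longleftrightarrow> (\<forall>g. l2 L g \<longrightarrow> l2 L (Ps g)) \<and>
     (\<forall>f g. l2 L f \<and> l2 L g \<longrightarrow> l2_inner L (P f) g = l2_inner L f (Ps g))"

definition bounded_form :: "real \<Rightarrow> ((real \<Rightarrow> complex) \<Rightarrow> complex) \<Rightarrow> bool" where
  "bounded_form L \<Gamma> \<longleftrightarrow>
     (\<forall>f g a b. l2 L f \<and> l2 L g \<longrightarrow> \<Gamma> (\<lambda>x. a * f x + b * g x) = a * \<Gamma> f + b * \<Gamma> g) \<and>
     (\<exists>C. \<forall>f. l2 L f \<longrightarrow> cmod (\<Gamma> f) \<le> C * l2_norm L f)"

text \<open>Gs : C -> L2 is the adjoint of the form G (inner product on C: a * cnj b).\<close>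
definition form_adjoint :: "real \<Rightarrow> ((real \<Rightarrow> complex) \<Rightarrow> complex)
    \<Rightarrow> (complex \<Rightarrow> (real \<Rightarrow> complex)) \<Rightarrow> bool" where
  "form_adjoint L \<Gamma> \<Gamma>s \<longleftrightarrow> (\<forall>c. l2 L (\<Gamma>s c)) \<and>
     (\<forall>f c. l2 L f \<longrightarrow> \<Gamma> f * cnj c = l2_inner L f (\<Gamma>s c))"

text \<open>z (a representative) lies in D(A*) = {z in H1(0,L). z(0)=0} with derivative h:
  z(x) = int_0^x h for x in [0,L], h in L2.\<close>
definition in_DAs :: "real \<Rightarrow> (real \<Rightarrow> complex) \<Rightarrow> (real \<Rightarrow> complex) \<Rightarrow> bool" where
  "in_DAs L z h \<longleftrightarrow> l2 L h \<and> (\<forall>x\<in>{0..L}. z x = integral {0..x} h)"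

definition Astar :: "real \<Rightarrow> (real \<times> real \<Rightarrow> complex) \<Rightarrow> (real \<Rightarrow> complex)
    \<Rightarrow> (real \<Rightarrow> complex) \<Rightarrow> (real \<Rightarrow> complex)" where
  "Astar L g z h = (\<lambda>x. - h x + integral {0..L} (\<lambda>y. cnj (g (y, x)) * z y))"

end

theory Submission
  imports Defs
begin

text \<open>
  On the kernel of \<open>B*\<close> the boundary term vanishes, because \<open>\<Gamma>* 0 = 0\<close>; this is the forward
  implication. Conversely, fix \<open>z\<^sub>0 \<in> D(A*)\<close> with \<open>z\<^sub>0(L) = 1\<close> (the ramp \<open>x/L\<close>). Every
  \<open>z \<in> D(A*)\<close> is \<open>z - z(L) z\<^sub>0\<close>, which lies in the kernel of \<open>B*\<close>, plus \<open>z(L) z\<^sub>0\<close>, so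
  the relation holds on all of \<open>D(A*)\<close> once \<open>P* \<Gamma>* c = c \<phi>\<close> with
  \<open>\<phi> = A\<^sub>0* P* z\<^sub>0 - P* A* z\<^sub>0\<close>. As \<open>P\<close> is invertible, \<open>P*\<close> is onto, so \<open>\<phi> = P* \<gamma>\<close> and
  \<open>\<Gamma> f = \<langle>f, \<gamma>\<rangle>\<close> works. Surjectivity of \<open>P*\<close> is the analytic core: \<open>P*\<close> is bounded below, so by
  completeness of \<open>L\<^sup>2\<close> the range of \<open>P*\<close> contains a best approximation \<open>P* \<gamma>\<close> of \<open>\<phi>\<close>; the residual
  \<open>r\<close> is orthogonal to the range, hence \<open>\<langle>P r, P r\<rangle> = \<langle>r, P* P r\<rangle> = 0\<close> and \<open>r = 0\<close>.
\<close>

section \<open>Square-integrable functions on an interval\<close>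

lemma AE_lebesgue_on_interval_iff:
  fixes L :: real
  shows "(AE x in lebesgue_on {0..L}. P x) \<longleftrightarrow> negligible {x\<in>{0..L}. \<not> P x}"
proof -
  have "(AE x in lebesgue_on {0..L}. P x) \<longleftrightarrow> (AE x in lebesgue. x \<in> {0..L} \<longrightarrow> P x)"
    by (rule AE_restrict_space_iff) auto
  also have "\<dots> \<longleftrightarrow> {x\<in>space lebesgue. \<not> (x \<in> {0..L} \<longrightarrow> P x)} \<in> null_sets lebesgue"
    by (rule completion.AE_iff_null_sets)
  also have "\<dots> \<longleftrightarrow> negligible {x\<in>{0..L}. \<not> P x}"
    by (simp add: negligible_iff_null_sets conj_commute)
  finally show ?thesis .
qed

lemma ae_eq_iff_AE: "ae_eq L f g \<longleftrightarrow> (AE x in lebesgue_on {0..L}. f x = g x)"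
  unfolding ae_eq_def AE_lebesgue_on_interval_iff by simp

lemma ae_eq_sym: "ae_eq L f g \<Longrightarrow> ae_eq L g f"
  by (simp add: ae_eq_iff_AE eq_commute)

lemma ae_eq_trans [trans]: "ae_eq L f g \<Longrightarrow> ae_eq L g h \<Longrightarrow> ae_eq L f h"
  unfolding ae_eq_iff_AE by (erule AE_mp, erule AE_mp) auto

lemma ae_eq_diff_zero_iff: "ae_eq L (\<lambda>x. f x - g x) (\<lambda>x. 0) \<longleftrightarrow> ae_eq L f g"
  unfolding ae_eq_iff_AE by simp

lemma l2_iff_integrable:
  "l2 L f \<longleftrightarrow> f \<in> borel_measurable (lebesgue_on {0..L}) \<and>
     integrable (lebesgue_on {0..L}) (\<lambda>x. (cmod (f x))\<^sup>2)"
proof -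
  have S: "{0..L} \<in> sets lebesgue" by simp
  have "(\<lambda>x. (cmod (f x))\<^sup>2) integrable_on {0..L} \<longleftrightarrow>
      integrable (lebesgue_on {0..L}) (\<lambda>x. (cmod (f x))\<^sup>2)"
    if "f \<in> borel_measurable (lebesgue_on {0..L})"
  proof
    assume "(\<lambda>x. (cmod (f x))\<^sup>2) integrable_on {0..L}"
    then have "(\<lambda>x. (cmod (f x))\<^sup>2) absolutely_integrable_on {0..L}"
      by (rule nonnegative_absolutely_integrable_1) auto
    then show "integrable (lebesgue_on {0..L}) (\<lambda>x. (cmod (f x))\<^sup>2)"
      using absolutely_integrable_measurable_real[OF S] by (simp add: abs_of_nonneg)
  qed (rule integrable_on_lebesgue_on[OF _ S])
  then show ?thesis
    unfolding l2_def using measurable_on_iff_borel_measurable[OF S] by blast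
qed

lemma sum_sq_le_twice_sq_sum: "((p::real) + q)\<^sup>2 \<le> 2 * p\<^sup>2 + 2 * q\<^sup>2"
  using zero_le_power2[of "p - q"] by (simp add: power2_eq_square algebra_simps)

lemma l2_linear_combination:
  assumes "l2 L f" "l2 L g"
  shows "l2 L (\<lambda>x. a * f x + b * g x)"
  unfolding l2_iff_integrable
proof
  have [measurable]: "f \<in> borel_measurable (lebesgue_on {0..L})"
    "g \<in> borel_measurable (lebesgue_on {0..L})"
    using assms by (auto simp: l2_iff_integrable)
  show m: "(\<lambda>x. a * f x + b * g x) \<in> borel_measurable (lebesgue_on {0..L})" by measurable
  have bound: "integrable (lebesgue_on {0..L})
      (\<lambda>x. 2 * (cmod a)\<^sup>2 * (cmod (f x))\<^sup>2 + 2 * (cmod b)\<^sup>2 * (cmod (g x))\<^sup>2)"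
    using assms by (auto simp: l2_iff_integrable)
  show "integrable (lebesgue_on {0..L}) (\<lambda>x. (cmod (a * f x + b * g x))\<^sup>2)"
  proof (rule Bochner_Integration.integrable_bound[OF bound])
    show "(\<lambda>x. (cmod (a * f x + b * g x))\<^sup>2) \<in> borel_measurable (lebesgue_on {0..L})"
      using m by measurable
    show "AE x in lebesgue_on {0..L}. norm ((cmod (a * f x + b * g x))\<^sup>2)
        \<le> norm (2 * (cmod a)\<^sup>2 * (cmod (f x))\<^sup>2 + 2 * (cmod b)\<^sup>2 * (cmod (g x))\<^sup>2)"
    proof (rule AE_I2)
      fix x
      have "cmod (a * f x + b * g x) \<le> cmod a * cmod (f x) + cmod b * cmod (g x)"
        by (metis norm_mult norm_triangle_ineq)
      then have "(cmod (a * f x + b * g x))\<^sup>2 \<le> (cmod a * cmod (f x) + cmod b * cmod (g x))\<^sup>2"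
        by (simp add: power_mono)
      also have "\<dots> \<le> 2 * (cmod a)\<^sup>2 * (cmod (f x))\<^sup>2 + 2 * (cmod b)\<^sup>2 * (cmod (g x))\<^sup>2"
        using sum_sq_le_twice_sq_sum[of "cmod a * cmod (f x)" "cmod b * cmod (g x)"]
        by (simp add: power_mult_distrib)
      finally show "norm ((cmod (a * f x + b * g x))\<^sup>2)
          \<le> norm (2 * (cmod a)\<^sup>2 * (cmod (f x))\<^sup>2 + 2 * (cmod b)\<^sup>2 * (cmod (g x))\<^sup>2)"
        by simp
    qed
  qed
qed

lemma l2_cmult: "l2 L f \<Longrightarrow> l2 L (\<lambda>x. a * f x)"
  using l2_linear_combination[of L f f a 0] by simp

lemma l2_add: "l2 L f \<Longrightarrow> l2 L g \<Longrightarrow> l2 L (\<lambda>x. f x + g x)"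
  using l2_linear_combination[of L f g 1 1] by simp

lemma l2_diff: "l2 L f \<Longrightarrow> l2 L g \<Longrightarrow> l2 L (\<lambda>x. f x - g x)"
  using l2_linear_combination[of L f g 1 "-1"] by simp

lemma l2_minus: "l2 L f \<Longrightarrow> l2 L (\<lambda>x. - f x)"
  using l2_cmult[of L f "-1"] by simp

lemma l2_zero: "l2 L (\<lambda>x. 0)"
  by (simp add: l2_iff_integrable)

lemma l2_ae_eq:
  assumes "l2 L f" "ae_eq L f g"
  shows "l2 L g"
proof -
  have negl: "negligible {x\<in>{0..L}. f x \<noteq> g x}"
    using assms(2) by (simp add: ae_eq_def)
  have "g measurable_on {0..L}"
  proof (rule measurable_on_spike[OF _ negl])
    show "f measurable_on {0..L}" using assms(1) by (simp add: l2_def)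
  qed auto
  moreover have "(\<lambda>x. (cmod (g x))\<^sup>2) integrable_on {0..L}"
  proof (rule integrable_spike[OF _ negl])
    show "(\<lambda>x. (cmod (f x))\<^sup>2) integrable_on {0..L}" using assms(1) by (simp add: l2_def)
  qed auto
  ultimately show ?thesis by (simp add: l2_def)
qed

lemma l2_continuous_on:
  assumes "continuous_on {0..L} z"
  shows "l2 L z"
  unfolding l2_def
proof
  show "z measurable_on {0..L}"
    using measurable_on_iff_borel_measurable[of "{0..L}" z]
      continuous_imp_measurable_on_sets_lebesgue[OF assms] by simp
  show "(\<lambda>x. (cmod (z x))\<^sup>2) integrable_on {0..L}"
    by (intro integrable_continuous_interval continuous_intros assms)
qed

lemma l2_integrable_on:
  assumes "l2 L h"
  shows "h integrable_on {0..L}"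
proof -
  have "h absolutely_integrable_on {0..L}"
  proof (rule measurable_bounded_by_integrable_imp_absolutely_integrable)
    show "h \<in> borel_measurable (lebesgue_on {0..L})"
      using assms by (simp add: l2_iff_integrable)
    show "(\<lambda>x. 1 + (cmod (h x))\<^sup>2) integrable_on {0..L}"
      using assms by (intro integrable_add) (auto simp: l2_def)
    show "norm (h x) \<le> 1 + (cmod (h x))\<^sup>2" for x
      using zero_le_power2[of "cmod (h x) - 1/2"] by (simp add: power2_eq_square algebra_simps)
  qed simp
  then show ?thesis using set_lebesgue_integral_eq_integral(1) by blast
qed

text \<open>Unlike \<open>l2_norm\<close>, the squared norm is a Lebesgue integral, so its basic laws hold for
  every function, square-integrable or not.\<close>

definition l2_normsq :: "real \<Rightarrow> (real \<Rightarrow> complex) \<Rightarrow> real" where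
  "l2_normsq L f = integral\<^sup>L (lebesgue_on {0..L}) (\<lambda>x. (cmod (f x))\<^sup>2)"

lemma l2_normsq_nonneg [simp]: "0 \<le> l2_normsq L f"
  unfolding l2_normsq_def by simp

lemma l2_norm_eq_sqrt_normsq: "l2 L f \<Longrightarrow> l2_norm L f = sqrt (l2_normsq L f)"
  unfolding l2_norm_def l2_normsq_def
  by (subst lebesgue_integral_eq_integral) (auto simp: l2_iff_integrable)

lemma l2_normsq_eq_0_iff:
  assumes "l2 L f"
  shows "l2_normsq L f = 0 \<longleftrightarrow> ae_eq L f (\<lambda>x. 0)"
proof -
  have "l2_normsq L f = 0 \<longleftrightarrow> (AE x in lebesgue_on {0..L}. (cmod (f x))\<^sup>2 = 0)"
    unfolding l2_normsq_def
    by (rule integral_nonneg_eq_0_iff_AE) (use assms in \<open>auto simp: l2_iff_integrable\<close>)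
  then show ?thesis by (simp add: ae_eq_iff_AE)
qed

lemma l2_normsq_ae_eq:
  assumes "l2 L f" "ae_eq L f g"
  shows "l2_normsq L f = l2_normsq L g"
  unfolding l2_normsq_def using assms l2_ae_eq[OF assms]
  by (intro integral_cong_AE) (auto simp: ae_eq_iff_AE l2_iff_integrable elim: AE_mp)

lemma l2_normsq_cmult: "l2_normsq L (\<lambda>x. c * f x) = (cmod c)\<^sup>2 * l2_normsq L f"
  by (simp add: l2_normsq_def norm_mult power_mult_distrib)

lemma l2_normsq_commute: "l2_normsq L (\<lambda>x. f x - g x) = l2_normsq L (\<lambda>x. g x - f x)"
  unfolding l2_normsq_def by (simp add: norm_minus_commute)

section \<open>The inner product\<close>

lemma integrable_l2_product:
  assumes "l2 L f" "l2 L g"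
  shows "integrable (lebesgue_on {0..L}) (\<lambda>x. f x * cnj (g x))"
proof -
  have [measurable]: "f \<in> borel_measurable (lebesgue_on {0..L})"
    "g \<in> borel_measurable (lebesgue_on {0..L})"
    using assms by (auto simp: l2_iff_integrable)
  have bound: "integrable (lebesgue_on {0..L}) (\<lambda>x. (cmod (f x))\<^sup>2 + (cmod (g x))\<^sup>2)"
    using assms by (auto simp: l2_iff_integrable)
  show ?thesis
  proof (rule Bochner_Integration.integrable_bound[OF bound])
    show "(\<lambda>x. f x * cnj (g x)) \<in> borel_measurable (lebesgue_on {0..L})"
      by (intro borel_measurable_times borel_measurable_continuous_on[where f=cnj])
         (auto intro: continuous_intros)
    show "AE x in lebesgue_on {0..L}. norm (f x * cnj (g x)) \<le> norm ((cmod (f x))\<^sup>2 + (cmod (g x))\<^sup>2)"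
    proof (rule AE_I2)
      fix x
      have "2 * (cmod (f x) * cmod (g x)) \<le> (cmod (f x))\<^sup>2 + (cmod (g x))\<^sup>2"
        using zero_le_power2[of "cmod (f x) - cmod (g x)"] by (simp add: power2_eq_square algebra_simps)
      moreover have "cmod (f x) * cmod (g x) \<le> 2 * (cmod (f x) * cmod (g x))" by simp
      ultimately have "norm (f x * cnj (g x)) \<le> (cmod (f x))\<^sup>2 + (cmod (g x))\<^sup>2"
        unfolding norm_mult complex_mod_cnj by linarith
      then show "norm (f x * cnj (g x)) \<le> norm ((cmod (f x))\<^sup>2 + (cmod (g x))\<^sup>2)"
        by simp
    qed
  qed
qed

lemma l2_inner_eq_lebesgue_integral:
  assumes "l2 L f" "l2 L g"
  shows "l2_inner L f g = integral\<^sup>L (lebesgue_on {0..L}) (\<lambda>x. f x * cnj (g x))"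
  unfolding l2_inner_def
  by (subst lebesgue_integral_eq_integral) (auto intro: integrable_l2_product[OF assms])

lemma l2_inner_linear_left:
  assumes "l2 L f" "l2 L g" "l2 L u"
  shows "l2_inner L (\<lambda>x. a * f x + b * g x) u = a * l2_inner L f u + b * l2_inner L g u"
proof -
  have "l2_inner L (\<lambda>x. a * f x + b * g x) u
      = integral\<^sup>L (lebesgue_on {0..L}) (\<lambda>x. a * (f x * cnj (u x)) + b * (g x * cnj (u x)))"
    by (subst l2_inner_eq_lebesgue_integral[OF l2_linear_combination[OF assms(1,2)] assms(3)])
       (simp add: algebra_simps)
  also have "\<dots> = a * integral\<^sup>L (lebesgue_on {0..L}) (\<lambda>x. f x * cnj (u x))
      + b * integral\<^sup>L (lebesgue_on {0..L}) (\<lambda>x. g x * cnj (u x))"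
    using integrable_l2_product[OF assms(1,3)] integrable_l2_product[OF assms(2,3)] by simp
  finally show ?thesis using l2_inner_eq_lebesgue_integral assms by simp
qed

lemma l2_inner_commute_cnj:
  assumes "l2 L f" "l2 L g"
  shows "l2_inner L g f = cnj (l2_inner L f g)"
  using Bochner_Integration.integral_cnj[of "lebesgue_on {0..L}" "\<lambda>x. f x * cnj (g x)"] assms
  by (simp add: l2_inner_eq_lebesgue_integral mult.commute)

lemma l2_inner_linear_right:
  assumes "l2 L f" "l2 L g" "l2 L u"
  shows "l2_inner L u (\<lambda>x. a * f x + b * g x) = cnj a * l2_inner L u f + cnj b * l2_inner L u g"
  using l2_inner_commute_cnj[OF l2_linear_combination[OF assms(1,2)] assms(3), of a b]
    l2_inner_linear_left[OF assms, of a b]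
    l2_inner_commute_cnj[OF assms(1,3)] l2_inner_commute_cnj[OF assms(2,3)]
  by simp

lemma l2_inner_diff_right:
  assumes "l2 L f" "l2 L g" "l2 L u"
  shows "l2_inner L u (\<lambda>x. f x - g x) = l2_inner L u f - l2_inner L u g"
  using l2_inner_linear_right[OF assms, of 1 "-1"] by simp

lemma l2_inner_self:
  assumes "l2 L f"
  shows "l2_inner L f f = complex_of_real (l2_normsq L f)"
  using assms
  by (simp add: l2_inner_eq_lebesgue_integral l2_normsq_def complex_norm_square[symmetric]
      del: of_real_power)

lemma l2_inner_ae_eq_left: "ae_eq L f f' \<Longrightarrow> l2_inner L f g = l2_inner L f' g"
  unfolding l2_inner_def ae_eq_def
  by (rule integral_spike[of "{x\<in>{0..L}. f x \<noteq> f' x}"]) auto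

lemma l2_inner_ae_eq_right: "ae_eq L g g' \<Longrightarrow> l2_inner L f g = l2_inner L f g'"
  unfolding l2_inner_def ae_eq_def
  by (rule integral_spike[of "{x\<in>{0..L}. g x \<noteq> g' x}"]) auto

lemma l2_ae_zero_if_inner_self_eq_0:
  assumes "l2 L f" "l2_inner L f f = 0"
  shows "ae_eq L f (\<lambda>x. 0)"
  using assms l2_inner_self[OF assms(1)] l2_normsq_eq_0_iff[OF assms(1)] by simp

lemma discriminant_le_of_nonneg_quadratic:
  fixes A B C :: real
  assumes B: "0 \<le> B" and nonneg: "\<And>s. 0 \<le> A - 2 * s * C + s\<^sup>2 * B"
  shows "C\<^sup>2 \<le> A * B"
proof (cases "B = 0")
  case True
  have "C = 0"
  proof (rule ccontr)
    assume "C \<noteq> 0"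
    then show False
      using nonneg[of "(A + 1) / (2 * C)"] True by (simp add: field_simps)
  qed
  then show ?thesis using True by simp
next
  case False
  then have "B > 0" using B by simp
  have "0 \<le> A - 2 * (C / B) * C + (C / B)\<^sup>2 * B" by (rule nonneg)
  also have "\<dots> = A - C\<^sup>2 / B" using \<open>B > 0\<close> by (simp add: field_simps power2_eq_square)
  finally show ?thesis using \<open>B > 0\<close> by (simp add: field_simps mult.commute)
qed

lemma l2_Cauchy_Schwarz_norm:
  assumes "l2 L f" "l2 L g"
  shows "integral\<^sup>L (lebesgue_on {0..L}) (\<lambda>x. cmod (f x) * cmod (g x))
    \<le> sqrt (l2_normsq L f) * sqrt (l2_normsq L g)"
proof -
  let ?A = "l2_normsq L f" and ?B = "l2_normsq L g"
    and ?C = "integral\<^sup>L (lebesgue_on {0..L}) (\<lambda>x. cmod (f x) * cmod (g x))"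
  have integrable: "integrable (lebesgue_on {0..L}) (\<lambda>x. (cmod (f x))\<^sup>2)"
    "integrable (lebesgue_on {0..L}) (\<lambda>x. (cmod (g x))\<^sup>2)"
    "integrable (lebesgue_on {0..L}) (\<lambda>x. cmod (f x) * cmod (g x))"
    using assms integrable_norm[OF integrable_l2_product[OF assms]]
    by (auto simp: l2_iff_integrable norm_mult)
  have "0 \<le> ?A - 2 * s * ?C + s\<^sup>2 * ?B" for s
  proof -
    have "0 \<le> integral\<^sup>L (lebesgue_on {0..L})
        (\<lambda>x. (cmod (f x))\<^sup>2 - 2 * s * (cmod (f x) * cmod (g x)) + s\<^sup>2 * (cmod (g x))\<^sup>2)"
      using zero_le_power2[of "cmod (f _) - s * cmod (g _)"]
      by (intro integral_nonneg_AE AE_I2) (simp add: power2_eq_square algebra_simps)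
    also have "\<dots> = ?A - 2 * s * ?C + s\<^sup>2 * ?B"
      using integrable by (simp add: l2_normsq_def)
    finally show ?thesis .
  qed
  then have "?C\<^sup>2 \<le> ?A * ?B" by (rule discriminant_le_of_nonneg_quadratic[OF l2_normsq_nonneg])
  then show ?thesis by (simp add: real_le_rsqrt flip: real_sqrt_mult)
qed

lemma l2_Cauchy_Schwarz:
  assumes "l2 L f" "l2 L g"
  shows "cmod (l2_inner L f g) \<le> sqrt (l2_normsq L f) * sqrt (l2_normsq L g)"
proof -
  have "cmod (l2_inner L f g) = norm (integral\<^sup>L (lebesgue_on {0..L}) (\<lambda>x. f x * cnj (g x)))"
    by (simp add: l2_inner_eq_lebesgue_integral assms)
  also have "\<dots> \<le> integral\<^sup>L (lebesgue_on {0..L}) (\<lambda>x. norm (f x * cnj (g x)))"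
    by (rule integral_norm_bound)
  also have "\<dots> = integral\<^sup>L (lebesgue_on {0..L}) (\<lambda>x. cmod (f x) * cmod (g x))"
    by (simp add: norm_mult)
  also have "\<dots> \<le> sqrt (l2_normsq L f) * sqrt (l2_normsq L g)"
    by (rule l2_Cauchy_Schwarz_norm[OF assms])
  finally show ?thesis .
qed

lemma l2_normsq_add:
  assumes "l2 L f" "l2 L g"
  shows "l2_normsq L (\<lambda>x. f x + g x) = l2_normsq L f + 2 * Re (l2_inner L f g) + l2_normsq L g"
proof -
  define p where "p x = Re (f x * cnj (g x))" for x
  have pointwise: "(cmod (a + b))\<^sup>2 = (cmod a)\<^sup>2 + 2 * Re (a * cnj b) + (cmod b)\<^sup>2" for a b
    unfolding cmod_power2 by (simp add: power2_eq_square algebra_simps)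
  have product: "integrable (lebesgue_on {0..L}) (\<lambda>x. f x * cnj (g x))"
    by (rule integrable_l2_product[OF assms])
  have "integrable (lebesgue_on {0..L}) p"
    unfolding p_def by (rule integrable_Re[OF product])
  have "l2_normsq L (\<lambda>x. f x + g x)
      = integral\<^sup>L (lebesgue_on {0..L}) (\<lambda>x. (cmod (f x))\<^sup>2 + 2 * p x + (cmod (g x))\<^sup>2)"
    unfolding l2_normsq_def p_def pointwise ..
  also have "\<dots> = l2_normsq L f + 2 * integral\<^sup>L (lebesgue_on {0..L}) p + l2_normsq L g"
    using assms \<open>integrable (lebesgue_on {0..L}) p\<close> by (simp add: l2_normsq_def l2_iff_integrable)
  also have "integral\<^sup>L (lebesgue_on {0..L}) p = Re (l2_inner L f g)"
    unfolding l2_inner_eq_lebesgue_integral[OF assms] p_def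
    by (rule Bochner_Integration.integral_Re[OF product])
  finally show ?thesis .
qed

lemma l2_norm_triangle:
  assumes "l2 L f" "l2 L g"
  shows "sqrt (l2_normsq L (\<lambda>x. f x + g x)) \<le> sqrt (l2_normsq L f) + sqrt (l2_normsq L g)"
proof -
  have "Re (l2_inner L f g) \<le> sqrt (l2_normsq L f) * sqrt (l2_normsq L g)"
    using complex_Re_le_cmod order_trans l2_Cauchy_Schwarz[OF assms] by blast
  then have "l2_normsq L (\<lambda>x. f x + g x) \<le> (sqrt (l2_normsq L f) + sqrt (l2_normsq L g))\<^sup>2"
    by (simp add: l2_normsq_add[OF assms] power2_eq_square algebra_simps)
  then show ?thesis by (simp add: real_le_lsqrt)
qed

lemma l2_norm_triangle_diff:
  assumes "l2 L f" "l2 L g" "l2 L h"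
  shows "sqrt (l2_normsq L (\<lambda>x. f x - h x))
    \<le> sqrt (l2_normsq L (\<lambda>x. f x - g x)) + sqrt (l2_normsq L (\<lambda>x. g x - h x))"
  using l2_norm_triangle[OF l2_diff[OF assms(1,2)] l2_diff[OF assms(2,3)]] by simp

lemma l2_parallelogram:
  assumes "l2 L u" "l2 L v"
  shows "l2_normsq L (\<lambda>x. u x - v x) + l2_normsq L (\<lambda>x. u x + v x)
    = 2 * l2_normsq L u + 2 * l2_normsq L v"
  using l2_normsq_add[OF assms] l2_normsq_add[OF assms(1) l2_minus[OF assms(2)]]
    l2_inner_linear_right[OF assms(2) assms(2) assms(1), of "-1" 0]
    l2_normsq_cmult[of L "-1" v]
  by simp

section \<open>Completeness\<close>

lemma integrable_majorant_of_bounded_incseq: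
  fixes S :: "nat \<Rightarrow> 'a \<Rightarrow> real"
  assumes [measurable]: "\<And>n. S n \<in> borel_measurable M"
    and nonneg: "\<And>n x. 0 \<le> S n x" and mono: "\<And>n x. S n x \<le> S (Suc n) x"
    and integrable: "\<And>n. integrable M (S n)"
    and bounded: "\<And>n. integral\<^sup>L M (S n) \<le> C"
  obtains B where "integrable M B" and "AE x in M. \<forall>n. S n x \<le> B x"
proof -
  define H where "H x = (SUP n. ennreal (S n x))" for x
  have H_measurable [measurable]: "H \<in> borel_measurable M" unfolding H_def by measurable
  have "(\<integral>\<^sup>+x. H x \<partial>M) = (SUP n. \<integral>\<^sup>+x. ennreal (S n x) \<partial>M)"
    unfolding H_def
    by (rule nn_integral_monotone_convergence_SUP) (auto intro!: incseq_SucI le_funI ennreal_leI mono)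
  also have "\<dots> \<le> C"
  proof (rule SUP_least)
    fix n
    have "(\<integral>\<^sup>+x. ennreal (S n x) \<partial>M) = ennreal (integral\<^sup>L M (S n))"
      by (intro nn_integral_eq_integral integrable) (simp add: nonneg)
    then show "(\<integral>\<^sup>+x. ennreal (S n x) \<partial>M) \<le> C"
      using ennreal_leI[OF bounded[of n]] by simp
  qed
  finally have H_finite: "(\<integral>\<^sup>+x. H x \<partial>M) \<noteq> \<infinity>"
    by (auto simp: top_unique)
  show ?thesis
  proof
    show "integrable M (\<lambda>x. enn2real (H x))"
    proof (rule integrableI_nonneg)
      have "(\<integral>\<^sup>+x. ennreal (enn2real (H x)) \<partial>M) \<le> (\<integral>\<^sup>+x. H x \<partial>M)"
        by (rule nn_integral_mono) (simp add: ennreal_enn2real_if)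
      then show "(\<integral>\<^sup>+x. ennreal (enn2real (H x)) \<partial>M) < \<infinity>"
        using H_finite by (simp add: less_top order_le_less_trans)
    qed auto
    show "AE x in M. \<forall>n. S n x \<le> enn2real (H x)"
      using nn_integral_PInf_AE[OF H_measurable H_finite]
    proof (eventually_elim, intro allI)
      fix x n assume "H x \<noteq> \<infinity>"
      have "ennreal (S n x) \<le> H x" unfolding H_def by (rule SUP_upper) simp
      then have "enn2real (ennreal (S n x)) \<le> enn2real (H x)"
        by (rule enn2real_mono) (use \<open>H x \<noteq> \<infinity>\<close> in \<open>simp add: top.not_eq_extremum\<close>)
      then show "S n x \<le> enn2real (H x)" by (simp add: nonneg)
    qed
  qed
qed

lemma square_integrable_bound_of_summable_norms:
  fixes d :: "nat \<Rightarrow> real \<Rightarrow> real"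
  assumes l2: "\<And>k. l2 L (\<lambda>x. complex_of_real (d k x))"
    and nonneg: "\<And>k x. 0 \<le> d k x"
    and norms: "\<And>n. (\<Sum>k<n. sqrt (l2_normsq L (\<lambda>x. complex_of_real (d k x)))) \<le> M"
  obtains B where "integrable (lebesgue_on {0..L}) B"
    and "AE x in lebesgue_on {0..L}. \<forall>n. (\<Sum>k<n. d k x)\<^sup>2 \<le> B x"
proof -
  define S where "S n x = (\<Sum>k<n. d k x)" for n x
  have S_Suc: "S (Suc n) x = S n x + d n x" for n x by (simp add: S_def)
  have l2_S: "l2 L (\<lambda>x. complex_of_real (S n x))" for n
  proof (induction n)
    case (Suc n)
    show ?case using l2_add[OF Suc l2] by (simp add: S_Suc)
  qed (simp add: S_def l2_zero)
  have triangle: "sqrt (l2_normsq L (\<lambda>x. complex_of_real (S n x)))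
      \<le> (\<Sum>k<n. sqrt (l2_normsq L (\<lambda>x. complex_of_real (d k x))))" for n
  proof (induction n)
    case (Suc n)
    show ?case
      using l2_norm_triangle[OF l2_S l2, of n n] Suc by (simp add: S_Suc)
  qed (simp add: S_def l2_normsq_def)
  have S_bound: "integral\<^sup>L (lebesgue_on {0..L}) (\<lambda>x. (S n x)\<^sup>2) \<le> M\<^sup>2" for n
  proof -
    have "sqrt (l2_normsq L (\<lambda>x. complex_of_real (S n x))) \<le> M"
      using triangle[of n] norms[of n] by linarith
    then show ?thesis by (simp add: sqrt_le_D l2_normsq_def)
  qed
  have [measurable]: "d k \<in> borel_measurable (lebesgue_on {0..L})" for k
  proof -
    have "(\<lambda>x. complex_of_real (d k x)) \<in> borel_measurable (lebesgue_on {0..L})"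
      using l2[of k] by (simp add: l2_iff_integrable)
    from measurable_compose[OF this borel_measurable_Re] show ?thesis by simp
  qed
  have S_measurable: "(\<lambda>x. (S n x)\<^sup>2) \<in> borel_measurable (lebesgue_on {0..L})" for n
    unfolding S_def by measurable
  have S_integrable: "integrable (lebesgue_on {0..L}) (\<lambda>x. (S n x)\<^sup>2)" for n
    using l2_S[of n] by (simp add: l2_iff_integrable)
  have S_mono: "(S n x)\<^sup>2 \<le> (S (Suc n) x)\<^sup>2" for n x
    by (rule power_mono) (simp_all add: S_Suc S_def sum_nonneg nonneg)
  obtain B where B: "integrable (lebesgue_on {0..L}) B"
    and AE_bound: "AE x in lebesgue_on {0..L}. \<forall>n. (S n x)\<^sup>2 \<le> B x"
    by (rule integrable_majorant_of_bounded_incseq[of "\<lambda>n x. (S n x)\<^sup>2",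
          OF S_measurable _ S_mono S_integrable S_bound]) simp
  show ?thesis
    by (rule that[OF B]) (use AE_bound in \<open>simp add: S_def\<close>)
qed

lemma l2_dominated_convergence:
  assumes l2: "\<And>k. l2 L (F k)"
    and g [measurable]: "g \<in> borel_measurable (lebesgue_on {0..L})"
    and lim: "AE x in lebesgue_on {0..L}. (\<lambda>k. F k x) \<longlonglongrightarrow> g x"
    and B: "integrable (lebesgue_on {0..L}) B"
    and dominated: "AE x in lebesgue_on {0..L}. \<forall>k. (cmod (g x - F k x))\<^sup>2 \<le> B x"
  shows "l2 L g" and "(\<lambda>k. l2_normsq L (\<lambda>x. F k x - g x)) \<longlonglongrightarrow> 0"
proof -
  have [measurable]: "F k \<in> borel_measurable (lebesgue_on {0..L})" for k
    using l2 by (simp add: l2_iff_integrable)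
  have "integrable (lebesgue_on {0..L}) (\<lambda>x. (cmod (g x))\<^sup>2)"
  proof (rule Bochner_Integration.integrable_bound)
    show "integrable (lebesgue_on {0..L}) (\<lambda>x. 2 * B x + 2 * (cmod (F 0 x))\<^sup>2)"
      using B l2[of 0] by (auto simp: l2_iff_integrable)
    show "AE x in lebesgue_on {0..L}. norm ((cmod (g x))\<^sup>2) \<le> norm (2 * B x + 2 * (cmod (F 0 x))\<^sup>2)"
      using dominated
    proof eventually_elim
      case (elim x)
      have "(cmod (g x))\<^sup>2 \<le> (cmod (g x - F 0 x) + cmod (F 0 x))\<^sup>2"
        using norm_triangle_ineq[of "g x - F 0 x" "F 0 x"] by (simp add: power_mono)
      also have "\<dots> \<le> 2 * (cmod (g x - F 0 x))\<^sup>2 + 2 * (cmod (F 0 x))\<^sup>2"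
        by (rule sum_sq_le_twice_sq_sum)
      finally show ?case using elim[rule_format, of 0] by simp
    qed
  qed measurable
  then show "l2 L g" by (simp add: l2_iff_integrable)
  have "(\<lambda>k. integral\<^sup>L (lebesgue_on {0..L}) (\<lambda>x. (cmod (g x - F k x))\<^sup>2))
      \<longlonglongrightarrow> integral\<^sup>L (lebesgue_on {0..L}) (\<lambda>x. 0::real)"
  proof (rule integral_dominated_convergence[OF _ _ B])
    show "AE x in lebesgue_on {0..L}. (\<lambda>k. (cmod (g x - F k x))\<^sup>2) \<longlonglongrightarrow> 0"
      using lim
    proof eventually_elim
      case (elim x)
      have "(\<lambda>k. (cmod (g x - F k x))\<^sup>2) \<longlonglongrightarrow> (cmod (g x - g x))\<^sup>2"
        by (intro tendsto_intros elim)
      then show ?case by simp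
    qed
    show "AE x in lebesgue_on {0..L}. norm ((cmod (g x - F k x))\<^sup>2) \<le> B x" for k
      using dominated by eventually_elim simp
  qed auto
  then show "(\<lambda>k. l2_normsq L (\<lambda>x. F k x - g x)) \<longlonglongrightarrow> 0"
    by (simp add: l2_normsq_def norm_minus_commute)
qed

lemma bounded_variation_convergent:
  fixes f :: "nat \<Rightarrow> 'a::banach"
  assumes variation: "\<And>n. (\<Sum>k<n. norm (f (Suc k) - f k)) \<le> M"
  shows "convergent f" and "norm (lim f - f k) \<le> 2 * M"
proof -
  have telescope: "f n = f 0 + (\<Sum>k<n. f (Suc k) - f k)" for n
    using sum_lessThan_telescope[of f n] by simp
  have "summable (\<lambda>k. norm (f (Suc k) - f k))"
    by (rule summableI_nonneg_bounded[OF _ variation]) simp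
  then have "summable (\<lambda>k. f (Suc k) - f k)"
    by (rule summable_norm_cancel)
  then have "convergent (\<lambda>n. f 0 + (\<Sum>k<n. f (Suc k) - f k))"
    by (intro convergent_add convergent_const summable_iff_convergent[THEN iffD1])
  then show "convergent f"
    by (simp flip: telescope)
  then have lim: "(\<lambda>n. norm (f n - f k)) \<longlonglongrightarrow> norm (lim f - f k)"
    by (intro tendsto_norm tendsto_diff tendsto_const) (simp add: convergent_LIMSEQ_iff)
  have bound: "norm (f n - f k) \<le> 2 * M" for n
  proof -
    have partial: "norm (f j - f 0) \<le> M" for j
      using norm_sum[of "\<lambda>k. f (Suc k) - f k" "{..<j}"] variation[of j] telescope[of j] by simp
    show ?thesis
      using norm_triangle_ineq4[of "f n - f 0" "f k - f 0"] partial[of n] partial[of k] by simp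
  qed
  show "norm (lim f - f k) \<le> 2 * M"
    by (rule LIMSEQ_le_const2[OF lim]) (use bound in auto)
qed

lemma l2_limit_of_fast_Cauchy:
  assumes l2: "\<And>k. l2 L (F k)"
    and fast: "\<And>k. sqrt (l2_normsq L (\<lambda>x. F (Suc k) x - F k x)) \<le> (1/2)^k"
  obtains g where "l2 L g" and "(\<lambda>k. l2_normsq L (\<lambda>x. F k x - g x)) \<longlonglongrightarrow> 0"
proof -
  have [measurable]: "F k \<in> borel_measurable (lebesgue_on {0..L})" for k
    using l2 by (simp add: l2_iff_integrable)
  define d where "d k x = cmod (F (Suc k) x - F k x)" for k x
  have l2_d: "l2 L (\<lambda>x. complex_of_real (d k x))" for k
    using l2_diff[OF l2 l2, of "Suc k" k] by (simp add: d_def l2_iff_integrable)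
  have d_nonneg: "0 \<le> d k x" for k x by (simp add: d_def)
  have geometric: "(\<Sum>k<n. (1/2::real)^k) \<le> 2" for n
  proof -
    have "(\<Sum>k<n. (1/2::real)^k) = 2 - 2 * (1/2)^n"
      by (induction n) (auto simp: field_simps)
    then show ?thesis by simp
  qed
  have "(\<Sum>k<n. sqrt (l2_normsq L (\<lambda>x. complex_of_real (d k x)))) \<le> 2" for n
    by (rule order_trans[OF sum_mono geometric]) (use fast in \<open>simp add: d_def l2_normsq_def\<close>)
  then obtain B where B: "integrable (lebesgue_on {0..L}) B"
    and bound: "AE x in lebesgue_on {0..L}. \<forall>n. (\<Sum>k<n. d k x)\<^sup>2 \<le> B x"
    by (rule square_integrable_bound_of_summable_norms[OF l2_d d_nonneg])
  have [measurable]: "B \<in> borel_measurable (lebesgue_on {0..L})"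
    using B by (rule borel_measurable_integrable)
  define good where "good x \<longleftrightarrow> (\<forall>n. (\<Sum>k<n. d k x)\<^sup>2 \<le> B x)" for x
  have [measurable]: "Measurable.pred (lebesgue_on {0..L}) good"
    unfolding good_def d_def by measurable
  have variation: "(\<Sum>k<n. norm (F (Suc k) x - F k x)) \<le> sqrt (B x)" if "good x" for n x
    using that by (intro real_le_rsqrt) (simp add: good_def d_def)
  text \<open>Taking the limit only on the set where it exists keeps it measurable.\<close>
  define g where "g x = lim (\<lambda>k. if good x then F k x else 0)" for x
  have g_lim: "(\<lambda>k. if good x then F k x else 0) \<longlonglongrightarrow> g x" for x
    using bounded_variation_convergent(1)[OF variation, of x] unfolding g_def
    by (cases "good x") (simp_all add: convergent_LIMSEQ_iff)
  have g_measurable: "g \<in> borel_measurable (lebesgue_on {0..L})"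
    by (rule borel_measurable_LIMSEQ_metric[OF _ g_lim]) measurable
  have AE_good: "AE x in lebesgue_on {0..L}. good x"
    using bound by (simp add: good_def)
  then have g_AE_lim: "AE x in lebesgue_on {0..L}. (\<lambda>k. F k x) \<longlonglongrightarrow> g x"
  proof eventually_elim
    case (elim x)
    then show ?case using g_lim[of x] by simp
  qed
  have "AE x in lebesgue_on {0..L}. \<forall>k. (cmod (g x - F k x))\<^sup>2 \<le> 4 * B x"
    using AE_good
  proof (rule AE_mp[OF _ AE_I2], intro impI allI)
    fix x k assume x: "good x"
    have "0 \<le> B x" using x[unfolded good_def, rule_format, of 0] by simp
    have "cmod (g x - F k x) \<le> 2 * sqrt (B x)"
      using bounded_variation_convergent(2)[OF variation[OF x]] x by (simp add: g_def)
    then have "(cmod (g x - F k x))\<^sup>2 \<le> (2 * sqrt (B x))\<^sup>2" by (rule power_mono) simp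
    also have "\<dots> = 4 * B x"
      using \<open>0 \<le> B x\<close> by (simp add: power_mult_distrib)
    finally show "(cmod (g x - F k x))\<^sup>2 \<le> 4 * B x" .
  qed
  from l2_dominated_convergence[OF l2 g_measurable g_AE_lim integrable_mult_right[OF B] this]
  show ?thesis by (rule that)
qed

lemma Cauchy_fast_subseq:
  fixes d :: "nat \<Rightarrow> nat \<Rightarrow> real"
  assumes Cauchy: "\<And>e. e > 0 \<Longrightarrow> \<exists>N. \<forall>m\<ge>N. \<forall>n\<ge>N. d m n < e"
  obtains r where "strict_mono r" and "\<And>k. d (r (Suc k)) (r k) < (1/4)^k"
proof -
  have "\<forall>k. \<exists>N. \<forall>m\<ge>N. \<forall>n\<ge>N. d m n < (1/4)^k"
    using Cauchy by simp
  then obtain N :: "nat \<Rightarrow> nat" where N: "\<And>k m n. m \<ge> N k \<Longrightarrow> n \<ge> N k \<Longrightarrow> d m n < (1/4)^k"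
    by metis
  define r where "r = rec_nat (N 0) (\<lambda>k rk. max (Suc rk) (N (Suc k)))"
  have r_Suc: "r (Suc k) = max (Suc (r k)) (N (Suc k))" for k by (simp add: r_def)
  have r_ge: "r k \<ge> N k" for k by (cases k) (auto simp: r_def)
  show ?thesis
  proof
    show "strict_mono r" unfolding strict_mono_Suc_iff by (simp add: r_Suc less_max_iff_disj)
    show "d (r (Suc k)) (r k) < (1/4)^k" for k
      using N[of k] r_ge[of k] r_Suc[of k] by simp
  qed
qed

lemma l2_complete:
  fixes f :: "nat \<Rightarrow> real \<Rightarrow> complex"
  assumes l2: "\<And>n. l2 L (f n)"
    and Cauchy: "\<And>e. e > 0 \<Longrightarrow> \<exists>N. \<forall>m\<ge>N. \<forall>n\<ge>N. l2_normsq L (\<lambda>x. f m x - f n x) < e"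
  obtains g where "l2 L g" and "\<And>e. e > 0 \<Longrightarrow> \<exists>N. \<forall>n\<ge>N. l2_normsq L (\<lambda>x. f n x - g x) < e"
proof -
  obtain r where "strict_mono r" and fast: "\<And>k. l2_normsq L (\<lambda>x. f (r (Suc k)) x - f (r k) x) < (1/4)^k"
    using Cauchy_fast_subseq[of "\<lambda>m n. l2_normsq L (\<lambda>x. f m x - f n x)", OF Cauchy] by blast
  have "sqrt (l2_normsq L (\<lambda>x. f (r (Suc k)) x - f (r k) x)) \<le> (1/2)^k" for k
  proof -
    have "l2_normsq L (\<lambda>x. f (r (Suc k)) x - f (r k) x) \<le> (1/4)^k"
      using fast[of k] by simp
    moreover have "(1/4::real)^k = ((1/2)^k)\<^sup>2"
    proof -
      have "((1/2::real)^k)\<^sup>2 = ((1/2)\<^sup>2)^k" by (simp only: power_even_eq[symmetric] power_mult)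
      also have "(1/2::real)\<^sup>2 = 1/4" by (simp add: power2_eq_square)
      finally show ?thesis by (rule sym)
    qed
    ultimately show ?thesis by (intro real_le_lsqrt) simp_all
  qed
  then obtain g where l2_g: "l2 L g" and sub: "(\<lambda>k. l2_normsq L (\<lambda>x. f (r k) x - g x)) \<longlonglongrightarrow> 0"
    using l2_limit_of_fast_Cauchy[of L "\<lambda>k. f (r k)"] l2 by blast
  show ?thesis
  proof (rule that[OF l2_g])
    fix e :: real assume "e > 0"
    obtain N0 where N0: "\<And>m n. m \<ge> N0 \<Longrightarrow> n \<ge> N0 \<Longrightarrow> l2_normsq L (\<lambda>x. f m x - f n x) < e / 4"
      using Cauchy[of "e/4"] \<open>e > 0\<close> by auto
    obtain j0 where j0: "\<And>j. j \<ge> j0 \<Longrightarrow> l2_normsq L (\<lambda>x. f (r j) x - g x) < e / 4"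
      using order_tendstoD(2)[OF sub, of "e/4"] \<open>e > 0\<close> by (auto simp: eventually_sequentially)
    define j where "j = max j0 N0"
    have j: "j \<ge> N0" "l2_normsq L (\<lambda>x. f (r j) x - g x) < e / 4"
      using j0[of j] by (simp_all add: j_def)
    have "r j \<ge> N0" using seq_suble[OF \<open>strict_mono r\<close>, of j] j(1) by simp
    show "\<exists>N. \<forall>n\<ge>N. l2_normsq L (\<lambda>x. f n x - g x) < e"
    proof (intro exI allI impI)
      fix n assume "n \<ge> N0"
      have "sqrt (l2_normsq L (\<lambda>x. f n x - g x))
          \<le> sqrt (l2_normsq L (\<lambda>x. f n x - f (r j) x)) + sqrt (l2_normsq L (\<lambda>x. f (r j) x - g x))"
        by (rule l2_norm_triangle_diff[OF l2 l2 l2_g])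
      also have "\<dots> < sqrt (e/4) + sqrt (e/4)"
        using N0[OF \<open>n \<ge> N0\<close> \<open>r j \<ge> N0\<close>] j(2) by (intro add_strict_mono) auto
      also have "\<dots> = sqrt e"
        by (simp add: real_sqrt_divide)
      finally show "l2_normsq L (\<lambda>x. f n x - g x) < e" by simp
    qed
  qed
qed

section \<open>Bounded operators and their adjoints\<close>

lemma bounded_op_l2: "bounded_op L P \<Longrightarrow> l2 L f \<Longrightarrow> l2 L (P f)"
  by (simp add: bounded_op_def)

lemma bounded_op_linear:
  "bounded_op L P \<Longrightarrow> l2 L f \<Longrightarrow> l2 L g \<Longrightarrow>
    ae_eq L (P (\<lambda>x. a * f x + b * g x)) (\<lambda>x. a * P f x + b * P g x)"
  by (simp add: bounded_op_def)

lemma bounded_op_diff: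
  "bounded_op L P \<Longrightarrow> l2 L f \<Longrightarrow> l2 L g \<Longrightarrow> ae_eq L (P (\<lambda>x. f x - g x)) (\<lambda>x. P f x - P g x)"
  using bounded_op_linear[of L P f g 1 "-1"] by simp

lemma bounded_op_zero: "bounded_op L P \<Longrightarrow> ae_eq L (P (\<lambda>x. 0)) (\<lambda>x. 0)"
  using bounded_op_linear[OF _ l2_zero l2_zero, of L P 0 0] by simp

lemma bounded_op_bound:
  assumes "bounded_op L P"
  obtains C where "C \<ge> 0" "\<And>f. l2 L f \<Longrightarrow> sqrt (l2_normsq L (P f)) \<le> C * sqrt (l2_normsq L f)"
proof -
  obtain C where C: "\<And>f. l2 L f \<Longrightarrow> l2_norm L (P f) \<le> C * l2_norm L f"
    using assms by (auto simp: bounded_op_def)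
  show ?thesis
  proof (rule that[of "max C 0"])
    fix f assume f: "l2 L f"
    have "sqrt (l2_normsq L (P f)) \<le> C * sqrt (l2_normsq L f)"
      using C[OF f] by (simp add: l2_norm_eq_sqrt_normsq f bounded_op_l2[OF assms f])
    also have "\<dots> \<le> max C 0 * sqrt (l2_normsq L f)" by (intro mult_right_mono) auto
    finally show "sqrt (l2_normsq L (P f)) \<le> max C 0 * sqrt (l2_normsq L f)" .
  qed simp
qed

lemma bounded_op_ae_eq:
  assumes P: "bounded_op L P" and f: "l2 L f" and "ae_eq L f f'"
  shows "ae_eq L (P f) (P f')"
proof -
  have f': "l2 L f'" by (rule l2_ae_eq[OF f \<open>ae_eq L f f'\<close>])
  define d where "d = (\<lambda>x. f x - f' x)"
  have d: "l2 L d" unfolding d_def by (rule l2_diff[OF f f'])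
  obtain C where "\<And>f. l2 L f \<Longrightarrow> sqrt (l2_normsq L (P f)) \<le> C * sqrt (l2_normsq L f)"
    using bounded_op_bound[OF P] by blast
  moreover have "l2_normsq L d = 0"
    using \<open>ae_eq L f f'\<close> l2_normsq_eq_0_iff[OF d] by (simp add: d_def ae_eq_diff_zero_iff)
  ultimately have "l2_normsq L (P d) \<le> 0"
    using d by fastforce
  then have "ae_eq L (P d) (\<lambda>x. 0)"
    using l2_normsq_eq_0_iff[OF bounded_op_l2[OF P d]] l2_normsq_nonneg[of L "P d"] by simp
  moreover have "ae_eq L (P d) (\<lambda>x. P f x - P f' x)"
    unfolding d_def by (rule bounded_op_diff[OF P f f'])
  ultimately show ?thesis
    using ae_eq_sym ae_eq_trans ae_eq_diff_zero_iff by metis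
qed

lemma op_adjoint_l2: "op_adjoint L P Ps \<Longrightarrow> l2 L g \<Longrightarrow> l2 L (Ps g)"
  by (simp add: op_adjoint_def)

lemma op_adjoint_inner:
  "op_adjoint L P Ps \<Longrightarrow> l2 L f \<Longrightarrow> l2 L g \<Longrightarrow> l2_inner L (P f) g = l2_inner L f (Ps g)"
  by (simp add: op_adjoint_def)

lemma op_adjoint_linear:
  assumes P: "bounded_op L P" and A: "op_adjoint L P Ps" and f: "l2 L f" and g: "l2 L g"
  shows "ae_eq L (Ps (\<lambda>x. a * f x + b * g x)) (\<lambda>x. a * Ps f x + b * Ps g x)"
proof -
  let ?h = "\<lambda>x. a * f x + b * g x" and ?k = "\<lambda>x. a * Ps f x + b * Ps g x"
  have h: "l2 L ?h" by (rule l2_linear_combination[OF f g])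
  have Ps_h: "l2 L (Ps ?h)" by (rule op_adjoint_l2[OF A h])
  have k: "l2 L ?k" by (rule l2_linear_combination[OF op_adjoint_l2[OF A f] op_adjoint_l2[OF A g]])
  have "l2_inner L (\<lambda>x. Ps ?h x - ?k x) (\<lambda>x. Ps ?h x - ?k x) = 0"
  proof -
    have same: "l2_inner L u (Ps ?h) = l2_inner L u ?k" if u: "l2 L u" for u
    proof -
      have "l2_inner L u (Ps ?h) = l2_inner L (P u) ?h"
        by (rule op_adjoint_inner[OF A u h, symmetric])
      also have "\<dots> = cnj a * l2_inner L (P u) f + cnj b * l2_inner L (P u) g"
        by (rule l2_inner_linear_right[OF f g bounded_op_l2[OF P u]])
      also have "\<dots> = l2_inner L u ?k"
        using op_adjoint_inner[OF A u f] op_adjoint_inner[OF A u g]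
          l2_inner_linear_right[OF op_adjoint_l2[OF A f] op_adjoint_l2[OF A g] u]
        by simp
      finally show ?thesis .
    qed
    then show ?thesis
      using same[OF l2_diff[OF Ps_h k]] l2_inner_diff_right[OF Ps_h k l2_diff[OF Ps_h k]] by simp
  qed
  then show ?thesis
    using l2_ae_zero_if_inner_self_eq_0[OF l2_diff[OF Ps_h k]] by (simp add: ae_eq_diff_zero_iff)
qed

lemma nonneg_le_if_square_le:
  fixes x y :: real
  assumes "0 \<le> x" "0 \<le> y" "x * x \<le> y * x"
  shows "x \<le> y"
  using assms by (cases "x = 0") (auto intro: mult_right_le_imp_le)

lemma op_adjoint_bounded_op:
  assumes P: "bounded_op L P" and A: "op_adjoint L P Ps"
  shows "bounded_op L Ps"
proof -
  obtain C where C: "C \<ge> 0" "\<And>f. l2 L f \<Longrightarrow> sqrt (l2_normsq L (P f)) \<le> C * sqrt (l2_normsq L f)"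
    using bounded_op_bound[OF P] by blast
  have "sqrt (l2_normsq L (Ps g)) \<le> C * sqrt (l2_normsq L g)" if g: "l2 L g" for g
  proof (rule nonneg_le_if_square_le)
    have Ps_g: "l2 L (Ps g)" by (rule op_adjoint_l2[OF A g])
    have "sqrt (l2_normsq L (Ps g)) * sqrt (l2_normsq L (Ps g)) = cmod (l2_inner L (P (Ps g)) g)"
      using l2_inner_self[OF Ps_g] op_adjoint_inner[OF A Ps_g g] by simp
    also have "\<dots> \<le> sqrt (l2_normsq L (P (Ps g))) * sqrt (l2_normsq L g)"
      by (rule l2_Cauchy_Schwarz[OF bounded_op_l2[OF P Ps_g] g])
    also have "\<dots> \<le> C * sqrt (l2_normsq L (Ps g)) * sqrt (l2_normsq L g)"
      by (intro mult_right_mono C(2)[OF Ps_g]) simp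
    finally show "sqrt (l2_normsq L (Ps g)) * sqrt (l2_normsq L (Ps g))
        \<le> C * sqrt (l2_normsq L g) * sqrt (l2_normsq L (Ps g))"
      by (simp add: ac_simps)
  qed (use C(1) in simp_all)
  then show ?thesis
    unfolding bounded_op_def
    using op_adjoint_l2[OF A] op_adjoint_linear[OF P A] op_adjoint_l2[OF A]
    by (auto simp: l2_norm_eq_sqrt_normsq)
qed

lemma op_adjoint_bounded_below:
  assumes A: "op_adjoint L P Ps" and I: "invertible_op L P"
  obtains C where "\<And>g. l2 L g \<Longrightarrow> sqrt (l2_normsq L g) \<le> C * sqrt (l2_normsq L (Ps g))"
proof -
  obtain Q where Q: "bounded_op L Q" "\<And>f. l2 L f \<Longrightarrow> ae_eq L (P (Q f)) f"
    using I by (auto simp: invertible_op_def)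
  obtain C where C: "C \<ge> 0" "\<And>f. l2 L f \<Longrightarrow> sqrt (l2_normsq L (Q f)) \<le> C * sqrt (l2_normsq L f)"
    using bounded_op_bound[OF Q(1)] by blast
  have "sqrt (l2_normsq L g) \<le> C * sqrt (l2_normsq L (Ps g))" if g: "l2 L g" for g
  proof (rule nonneg_le_if_square_le)
    have Q_g: "l2 L (Q g)" by (rule bounded_op_l2[OF Q(1) g])
    have "sqrt (l2_normsq L g) * sqrt (l2_normsq L g) = cmod (l2_inner L (P (Q g)) g)"
      using l2_inner_self[OF g] l2_inner_ae_eq_left[OF Q(2)[OF g], of g] by simp
    also have "\<dots> = cmod (l2_inner L (Q g) (Ps g))"
      by (simp add: op_adjoint_inner[OF A Q_g g])
    also have "\<dots> \<le> sqrt (l2_normsq L (Q g)) * sqrt (l2_normsq L (Ps g))"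
      by (rule l2_Cauchy_Schwarz[OF Q_g op_adjoint_l2[OF A g]])
    also have "\<dots> \<le> C * sqrt (l2_normsq L g) * sqrt (l2_normsq L (Ps g))"
      by (intro mult_right_mono C(2)[OF g]) simp
    finally show "sqrt (l2_normsq L g) * sqrt (l2_normsq L g)
        \<le> C * sqrt (l2_normsq L (Ps g)) * sqrt (l2_normsq L g)"
      by (simp add: ac_simps)
  qed (use C(1) in simp_all)
  then show ?thesis by (rule that)
qed

lemma l2_Apollonius:
  assumes a: "l2 L a" and b: "l2 L b" and c: "l2 L c"
  shows "l2_normsq L (\<lambda>x. a x - b x) = 2 * l2_normsq L (\<lambda>x. a x - c x)
    + 2 * l2_normsq L (\<lambda>x. b x - c x) - 4 * l2_normsq L (\<lambda>x. (a x + b x) / 2 - c x)"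
proof -
  have "(\<lambda>x. (a x - c x) + (b x - c x)) = (\<lambda>x. 2 * ((a x + b x) / 2 - c x))"
    by (simp add: fun_eq_iff field_simps)
  then have "l2_normsq L (\<lambda>x. (a x - c x) + (b x - c x))
      = l2_normsq L (\<lambda>x. 2 * ((a x + b x) / 2 - c x))"
    by (simp only:)
  also have "\<dots> = 4 * l2_normsq L (\<lambda>x. (a x + b x) / 2 - c x)"
    unfolding l2_normsq_cmult by simp
  finally have "l2_normsq L (\<lambda>x. (a x - c x) + (b x - c x))
      = 4 * l2_normsq L (\<lambda>x. (a x + b x) / 2 - c x)" .
  moreover have "l2_normsq L (\<lambda>x. (a x - c x) - (b x - c x)) = l2_normsq L (\<lambda>x. a x - b x)"
    by simp
  ultimately show ?thesis
    using l2_parallelogram[OF l2_diff[OF a c] l2_diff[OF b c]] by linarith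
qed

lemma bounded_below_minimizing_Cauchy:
  assumes T: "bounded_op L T"
    and below: "\<And>f. l2 L f \<Longrightarrow> sqrt (l2_normsq L f) \<le> C * sqrt (l2_normsq L (T f))"
    and \<phi>: "l2 L \<phi>"
    and lower: "\<And>\<gamma>. l2 L \<gamma> \<Longrightarrow> \<delta> \<le> l2_normsq L (\<lambda>x. T \<gamma> x - \<phi> x)"
    and G: "\<And>n. l2 L (G n)" "\<And>n. l2_normsq L (\<lambda>x. T (G n) x - \<phi> x) \<le> \<delta> + 1 / Suc n"
  shows "l2_normsq L (\<lambda>x. G m x - G n x) \<le> C\<^sup>2 * (2 / Suc m + 2 / Suc n)"
proof -
  define mid where "mid x = (1/2) * G m x + (1/2) * G n x" for x
  have "l2 L mid" unfolding mid_def by (rule l2_linear_combination[OF G(1) G(1)])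
  have "ae_eq L (T mid) (\<lambda>x. (1/2) * T (G m) x + (1/2) * T (G n) x)"
    unfolding mid_def by (rule bounded_op_linear[OF T G(1) G(1)])
  then have "ae_eq L (\<lambda>x. T mid x - \<phi> x) (\<lambda>x. (T (G m) x + T (G n) x) / 2 - \<phi> x)"
    unfolding ae_eq_iff_AE by (rule AE_mp) (auto simp: field_simps)
  then have "\<delta> \<le> l2_normsq L (\<lambda>x. (T (G m) x + T (G n) x) / 2 - \<phi> x)"
    using lower[OF \<open>l2 L mid\<close>] l2_normsq_ae_eq[OF l2_diff[OF bounded_op_l2[OF T \<open>l2 L mid\<close>] \<phi>]]
    by simp
  then have "l2_normsq L (\<lambda>x. T (G m) x - T (G n) x) \<le> 2 * (1 / Suc m) + 2 * (1 / Suc n)"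
    using l2_Apollonius[OF bounded_op_l2[OF T G(1)] bounded_op_l2[OF T G(1)] \<phi>, of m n] G(2)[of m] G(2)[of n]
    by linarith
  also have "\<dots> = 2 / Suc m + 2 / Suc n" by simp
  finally have "l2_normsq L (\<lambda>x. T (G m) x - T (G n) x) \<le> 2 / Suc m + 2 / Suc n" .
  moreover have "l2_normsq L (\<lambda>x. G m x - G n x) \<le> C\<^sup>2 * l2_normsq L (T (\<lambda>x. G m x - G n x))"
    using sqrt_le_D[OF below[OF l2_diff[OF G(1) G(1)]]] by (simp add: power_mult_distrib)
  moreover have "l2_normsq L (T (\<lambda>x. G m x - G n x)) = l2_normsq L (\<lambda>x. T (G m) x - T (G n) x)"
    by (rule l2_normsq_ae_eq[OF bounded_op_l2[OF T l2_diff[OF G(1) G(1)]] bounded_op_diff[OF T G(1) G(1)]])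
  ultimately show ?thesis
    by (metis mult_left_mono order_trans zero_le_power2)
qed

lemma Cauchy_if_bounded_by_harmonic:
  fixes d :: "nat \<Rightarrow> nat \<Rightarrow> real"
  assumes bound: "\<And>m n. d m n \<le> K * (2 / Suc m + 2 / Suc n)" and "0 \<le> K" and "e > 0"
  shows "\<exists>N. \<forall>m\<ge>N. \<forall>n\<ge>N. d m n < e"
proof -
  obtain N :: nat where N: "4 * K / e < N" using reals_Archimedean2 by blast
  have "d m n < e" if "m \<ge> N" "n \<ge> N" for m n
  proof -
    have "2 / Suc m + 2 / Suc n \<le> 2 / Suc N + (2 / Suc N :: real)"
      using that by (intro add_mono) (simp_all add: frac_le)
    also have "\<dots> = 4 / Suc N" by (simp flip: add_divide_distrib)
    finally have "K * (2 / Suc m + 2 / Suc n) \<le> K * (4 / Suc N)"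
      by (rule mult_left_mono) (rule \<open>0 \<le> K\<close>)
    also have "\<dots> < e" using N \<open>e > 0\<close> by (simp add: field_simps)
    finally show ?thesis using bound[of m n] by simp
  qed
  then show ?thesis by blast
qed

lemma bounded_below_best_approximation:
  assumes T: "bounded_op L T"
    and below: "\<And>f. l2 L f \<Longrightarrow> sqrt (l2_normsq L f) \<le> C * sqrt (l2_normsq L (T f))"
    and \<phi>: "l2 L \<phi>"
  obtains \<gamma> where "l2 L \<gamma>"
    and "\<And>\<eta>. l2 L \<eta> \<Longrightarrow> l2_normsq L (\<lambda>x. T \<gamma> x - \<phi> x) \<le> l2_normsq L (\<lambda>x. T \<eta> x - \<phi> x)"
proof -
  define D where "D \<gamma> = l2_normsq L (\<lambda>x. T \<gamma> x - \<phi> x)" for \<gamma>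
  define \<delta> where "\<delta> = Inf (D ` {\<gamma>. l2 L \<gamma>})"
  have bdd: "bdd_below (D ` {\<gamma>. l2 L \<gamma>})" by (rule bdd_belowI[of _ 0]) (auto simp: D_def)
  have nonempty: "D ` {\<gamma>. l2 L \<gamma>} \<noteq> {}" using l2_zero by auto
  have lower: "\<delta> \<le> D \<gamma>" if "l2 L \<gamma>" for \<gamma>
    unfolding \<delta>_def by (rule cInf_lower[OF _ bdd]) (use that in auto)
  have "\<exists>\<gamma>. l2 L \<gamma> \<and> D \<gamma> < \<delta> + 1 / Suc n" for n
    using cInf_lessD[OF nonempty, of "\<delta> + 1 / Suc n"] by (auto simp: \<delta>_def)
  then obtain G where G: "\<And>n. l2 L (G n)" "\<And>n. D (G n) < \<delta> + 1 / Suc n" by metis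
  have G_le: "D (G n) \<le> \<delta> + 1 / Suc n" for n using G(2)[of n] by simp
  note Cauchy_bound = bounded_below_minimizing_Cauchy[OF T below \<phi> lower[unfolded D_def] G(1)
      G_le[unfolded D_def]]
  obtain \<gamma> where "l2 L \<gamma>" and lim: "\<And>e. e > 0 \<Longrightarrow> \<exists>N. \<forall>n\<ge>N. l2_normsq L (\<lambda>x. G n x - \<gamma> x) < e"
    using l2_complete[OF G(1) Cauchy_if_bounded_by_harmonic[OF Cauchy_bound zero_le_power2]] by blast
  obtain CT where CT: "\<And>f. l2 L f \<Longrightarrow> sqrt (l2_normsq L (T f)) \<le> CT * sqrt (l2_normsq L f)"
    using bounded_op_bound[OF T] by blast
  have G_lim: "(\<lambda>n. l2_normsq L (\<lambda>x. \<gamma> x - G n x)) \<longlonglongrightarrow> 0"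
    using lim by (intro LIMSEQ_I) (simp add: l2_normsq_commute[of L \<gamma>])
  have bound: "sqrt (D \<gamma>) \<le> CT * sqrt (l2_normsq L (\<lambda>x. \<gamma> x - G n x)) + sqrt (\<delta> + 1 / Suc n)" for n
  proof -
    have "sqrt (D \<gamma>) \<le> sqrt (l2_normsq L (\<lambda>x. T \<gamma> x - T (G n) x)) + sqrt (D (G n))"
      unfolding D_def
      by (rule l2_norm_triangle_diff[OF bounded_op_l2[OF T \<open>l2 L \<gamma>\<close>] bounded_op_l2[OF T G(1)] \<phi>])
    also have "l2_normsq L (\<lambda>x. T \<gamma> x - T (G n) x) = l2_normsq L (T (\<lambda>x. \<gamma> x - G n x))"
      by (rule l2_normsq_ae_eq[OF bounded_op_l2[OF T l2_diff[OF \<open>l2 L \<gamma>\<close> G(1)]]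
            bounded_op_diff[OF T \<open>l2 L \<gamma>\<close> G(1)], symmetric])
    also have "sqrt (l2_normsq L (T (\<lambda>x. \<gamma> x - G n x))) \<le> CT * sqrt (l2_normsq L (\<lambda>x. \<gamma> x - G n x))"
      by (rule CT[OF l2_diff[OF \<open>l2 L \<gamma>\<close> G(1)]])
    also have "sqrt (D (G n)) \<le> sqrt (\<delta> + 1 / Suc n)"
      using G(2)[of n] by simp
    finally show ?thesis by simp
  qed
  have "(\<lambda>n. CT * sqrt (l2_normsq L (\<lambda>x. \<gamma> x - G n x)) + sqrt (\<delta> + 1 / Suc n))
      \<longlonglongrightarrow> CT * sqrt 0 + sqrt (\<delta> + 0)"
    by (intro tendsto_intros G_lim LIMSEQ_Suc[OF lim_inverse_n'])
  then have "(\<lambda>n. CT * sqrt (l2_normsq L (\<lambda>x. \<gamma> x - G n x)) + sqrt (\<delta> + 1 / Suc n))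
      \<longlonglongrightarrow> sqrt \<delta>"
    by simp
  then have "sqrt (D \<gamma>) \<le> sqrt \<delta>"
    by (rule LIMSEQ_le_const) (use bound in simp)
  then have "D \<gamma> \<le> D \<eta>" if "l2 L \<eta>" for \<eta>
    using lower[OF that] by simp
  then show ?thesis using that[OF \<open>l2 L \<gamma>\<close>] by (simp add: D_def)
qed

lemma eq_0_if_first_variation_nonneg:
  fixes c :: complex and K :: real
  assumes "0 \<le> K" and variation: "\<And>t. 0 \<le> 2 * Re (cnj t * c) + (cmod t)\<^sup>2 * K"
  shows "c = 0"
proof -
  define s where "s = 1 / (K + 1)"
  from \<open>0 \<le> K\<close> have "s > 0" "s * K < 2" by (simp_all add: s_def field_simps)
  have "cnj c * c = complex_of_real ((cmod c)\<^sup>2)"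
    by (simp only: complex_norm_square mult.commute)
  then have "cnj (- (of_real s * c)) * c = - of_real (s * (cmod c)\<^sup>2)"
    by (simp add: mult.assoc)
  then have "Re (cnj (- (of_real s * c)) * c) = Re (- of_real (s * (cmod c)\<^sup>2))"
    by (simp only:)
  then have "Re (cnj (- (of_real s * c)) * c) = - (s * (cmod c)\<^sup>2)"
    by simp
  moreover have "(cmod (- (of_real s * c)))\<^sup>2 = s\<^sup>2 * (cmod c)\<^sup>2"
    using \<open>s > 0\<close> by (simp add: norm_mult power_mult_distrib)
  ultimately have "0 \<le> 2 * (- (s * (cmod c)\<^sup>2)) + s\<^sup>2 * (cmod c)\<^sup>2 * K"
    using variation[of "- (of_real s * c)"] by simp
  then have "0 \<le> (cmod c)\<^sup>2 * (s * (s * K - 2))"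
    by (simp add: power2_eq_square algebra_simps)
  moreover have "s * (s * K - 2) < 0"
    using \<open>s > 0\<close> \<open>s * K < 2\<close> by (simp add: mult_pos_neg)
  ultimately have "(cmod c)\<^sup>2 \<le> 0"
    by (meson mult_pos_neg not_le)
  then show ?thesis by simp
qed

lemma best_approximation_residual_orthogonal:
  assumes T: "bounded_op L T" and \<gamma>: "l2 L \<gamma>" and \<phi>: "l2 L \<phi>"
    and best: "\<And>\<eta>. l2 L \<eta> \<Longrightarrow> l2_normsq L (\<lambda>x. T \<gamma> x - \<phi> x) \<le> l2_normsq L (\<lambda>x. T \<eta> x - \<phi> x)"
    and \<eta>: "l2 L \<eta>"
  shows "l2_inner L (\<lambda>x. T \<gamma> x - \<phi> x) (T \<eta>) = 0"
proof -
  define r where "r = (\<lambda>x. T \<gamma> x - \<phi> x)"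
  define c where "c = l2_inner L r (T \<eta>)"
  define K where "K = l2_normsq L (T \<eta>)"
  have r: "l2 L r" unfolding r_def by (rule l2_diff[OF bounded_op_l2[OF T \<gamma>] \<phi>])
  have T\<eta>: "l2 L (T \<eta>)" by (rule bounded_op_l2[OF T \<eta>])
  text \<open>First variation of the distance in the direction \<open>\<eta>\<close>.\<close>
  have variation: "0 \<le> 2 * Re (cnj t * c) + (cmod t)\<^sup>2 * K" for t
  proof -
    have "ae_eq L (T (\<lambda>x. 1 * \<gamma> x + t * \<eta> x)) (\<lambda>x. 1 * T \<gamma> x + t * T \<eta> x)"
      by (rule bounded_op_linear[OF T \<gamma> \<eta>])
    then have "ae_eq L (\<lambda>x. T (\<lambda>x. \<gamma> x + t * \<eta> x) x - \<phi> x) (\<lambda>x. r x + t * T \<eta> x)"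
      unfolding ae_eq_iff_AE r_def by (rule AE_mp) auto
    then have "l2_normsq L r \<le> l2_normsq L (\<lambda>x. r x + t * T \<eta> x)"
      using best[OF l2_linear_combination[OF \<gamma> \<eta>, of 1 t]]
        l2_normsq_ae_eq[OF l2_diff[OF bounded_op_l2[OF T l2_linear_combination[OF \<gamma> \<eta>, of 1 t]] \<phi>]]
      by (simp add: r_def)
    also have "\<dots> = l2_normsq L r + 2 * Re (cnj t * c) + (cmod t)\<^sup>2 * K"
      using l2_normsq_add[OF r l2_cmult[OF T\<eta>]] l2_inner_linear_right[OF T\<eta> T\<eta> r, of t 0]
      by (simp add: c_def K_def l2_normsq_cmult)
    finally show ?thesis by simp
  qed
  have "K \<ge> 0" by (simp add: K_def)
  then have "c = 0" by (rule eq_0_if_first_variation_nonneg[OF _ variation])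
  then show ?thesis by (simp add: c_def flip: r_def)
qed

lemma op_adjoint_surj:
  assumes P: "bounded_op L P" and A: "op_adjoint L P Ps" and I: "invertible_op L P"
    and \<phi>: "l2 L \<phi>"
  obtains \<gamma> where "l2 L \<gamma>" and "ae_eq L (Ps \<gamma>) \<phi>"
proof -
  have Ps: "bounded_op L Ps" by (rule op_adjoint_bounded_op[OF P A])
  obtain C where "\<And>g. l2 L g \<Longrightarrow> sqrt (l2_normsq L g) \<le> C * sqrt (l2_normsq L (Ps g))"
    using op_adjoint_bounded_below[OF A I] by blast
  then obtain \<gamma> where \<gamma>: "l2 L \<gamma>"
    and best: "\<And>\<eta>. l2 L \<eta> \<Longrightarrow> l2_normsq L (\<lambda>x. Ps \<gamma> x - \<phi> x) \<le> l2_normsq L (\<lambda>x. Ps \<eta> x - \<phi> x)"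
    using bounded_below_best_approximation[OF Ps _ \<phi>] by blast
  define r where "r = (\<lambda>x. Ps \<gamma> x - \<phi> x)"
  have r: "l2 L r" unfolding r_def by (rule l2_diff[OF op_adjoint_l2[OF A \<gamma>] \<phi>])
  have Pr: "l2 L (P r)" by (rule bounded_op_l2[OF P r])
  have "l2_inner L (P r) (P r) = l2_inner L r (Ps (P r))"
    by (rule op_adjoint_inner[OF A r Pr])
  also have "\<dots> = 0"
    using best_approximation_residual_orthogonal[OF Ps \<gamma> \<phi> best Pr] by (simp only: r_def)
  finally have "ae_eq L (P r) (\<lambda>x. 0)" by (rule l2_ae_zero_if_inner_self_eq_0[OF Pr])
  obtain Q where Q: "bounded_op L Q" "ae_eq L (Q (P r)) r"
    using I r by (auto simp: invertible_op_def)
  have "ae_eq L r (Q (\<lambda>x. 0))"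
    using ae_eq_sym[OF Q(2)] bounded_op_ae_eq[OF Q(1) Pr \<open>ae_eq L (P r) (\<lambda>x. 0)\<close>] by (rule ae_eq_trans)
  then have "ae_eq L r (\<lambda>x. 0)"
    using bounded_op_zero[OF Q(1)] by (rule ae_eq_trans)
  then show ?thesis
    using that[OF \<gamma>] by (simp add: r_def ae_eq_diff_zero_iff)
qed

section \<open>The domain of the adjoint\<close>

lemma in_DAs_continuous_on:
  assumes "in_DAs L z h"
  shows "continuous_on {0..L} z"
proof -
  have "continuous_on {0..L} (\<lambda>x. integral {0..x} h)"
    by (rule indefinite_integral_continuous_1[OF l2_integrable_on]) (use assms in \<open>simp add: in_DAs_def\<close>)
  then show ?thesis
    by (rule continuous_on_cong[THEN iffD1, rotated 2]) (use assms in \<open>auto simp: in_DAs_def\<close>)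
qed

lemma in_DAs_l2: "in_DAs L z h \<Longrightarrow> l2 L z"
  by (rule l2_continuous_on[OF in_DAs_continuous_on])

lemma in_DAs_derivative_l2: "in_DAs L z h \<Longrightarrow> l2 L h"
  by (simp add: in_DAs_def)

lemma in_DAs_diff_cmult:
  assumes "in_DAs L z1 h1" "in_DAs L z0 h0"
  shows "in_DAs L (\<lambda>x. z1 x - c * z0 x) (\<lambda>x. h1 x - c * h0 x)"
  unfolding in_DAs_def
proof (intro conjI ballI)
  show "l2 L (\<lambda>x. h1 x - c * h0 x)"
    using l2_linear_combination[OF in_DAs_derivative_l2[OF assms(1)] in_DAs_derivative_l2[OF assms(2)], of 1 "-c"] by simp
  fix x assume x: "x \<in> {0..L}"
  have i1: "h1 integrable_on {0..x}"
    by (rule integrable_on_subinterval[OF l2_integrable_on[OF in_DAs_derivative_l2[OF assms(1)]]]) (use x in auto)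
  have i0: "h0 integrable_on {0..x}"
    by (rule integrable_on_subinterval[OF l2_integrable_on[OF in_DAs_derivative_l2[OF assms(2)]]]) (use x in auto)
  have "integral {0..x} (\<lambda>x. h1 x - c * h0 x) = integral {0..x} h1 - c * integral {0..x} h0"
    using i1 i0 by (subst integral_diff) (auto intro: integrable_on_mult_right)
  then show "z1 x - c * z0 x = integral {0..x} (\<lambda>x. h1 x - c * h0 x)"
    using assms x by (simp add: in_DAs_def)
qed

lemma in_DAs_ramp:
  assumes L: "L > 0"
  shows "in_DAs L (\<lambda>x. complex_of_real (x / L)) (\<lambda>x. complex_of_real (1 / L))"
  unfolding in_DAs_def
proof (intro conjI ballI)
  show "l2 L (\<lambda>x. complex_of_real (1 / L))" by (rule l2_continuous_on) (intro continuous_intros)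
  fix x assume "x \<in> {0..L}"
  then show "complex_of_real (x / L) = integral {0..x} (\<lambda>x. complex_of_real (1 / L))"
    by (simp add: scaleR_conv_of_real)
qed

section \<open>The integral term of the adjoint\<close>

lemma borel_measurable_cnj [measurable]:
  fixes f :: "'a \<Rightarrow> complex"
  shows "f \<in> borel_measurable M \<Longrightarrow> (\<lambda>x. cnj (f x)) \<in> borel_measurable M"
  unfolding borel_measurable_complex_iff by simp

lemma borel_measurable_lebesgue_on_of_lborel:
  fixes F :: "real \<Rightarrow> 'b::topological_space"
  assumes "F \<in> borel_measurable lborel"
  shows "F \<in> borel_measurable (lebesgue_on {0..L})"
  using assms by (intro measurable_restrict_space1 measurable_completion) simp

lemma integral_lebesgue_on_interval_eq_lborel:
  fixes F :: "real \<Rightarrow> 'b::{banach, second_countable_topology}"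
  assumes "F \<in> borel_measurable lborel"
  shows "integral\<^sup>L (lebesgue_on {0..L}) F = integral\<^sup>L lborel (\<lambda>y. indicator {0..L} y *\<^sub>R F y)"
proof -
  have "integral\<^sup>L (lebesgue_on {0..L}) F = integral\<^sup>L lebesgue (\<lambda>y. indicator {0..L} y *\<^sub>R F y)"
    by (rule integral_restrict_space) simp
  also have "\<dots> = integral\<^sup>L lborel (\<lambda>y. indicator {0..L} y *\<^sub>R F y)"
    by (rule integral_completion) (use assms in simp)
  finally show ?thesis .
qed

lemma integrable_lebesgue_on_interval_if_lborel:
  fixes F :: "real \<Rightarrow> 'b::{banach, second_countable_topology}"
  assumes "integrable lborel F"
  shows "integrable (lebesgue_on {0..L}) F"
proof -
  have [measurable]: "F \<in> borel_measurable lborel" by (rule borel_measurable_integrable[OF assms])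
  have "integrable lborel (\<lambda>y. indicator {0..L} y *\<^sub>R F y)"
    using integrable_mult_indicator[OF _ assms, of "{0..L}"] by simp
  then have "integrable lebesgue (\<lambda>y. indicator {0..L} y *\<^sub>R F y)"
    by (subst integrable_completion) simp_all
  then show ?thesis
    by (subst integrable_restrict_space) simp_all
qed

lemma negligible_if_AE_lborel:
  assumes "AE x in lborel. P x"
  shows "negligible {x\<in>{0..L::real}. \<not> P x}"
proof -
  have "AE x in lebesgue. P x" by (rule AE_completion[OF assms])
  then have "{x\<in>space lebesgue. \<not> P x} \<in> null_sets lebesgue"
    by (simp add: completion.AE_iff_null_sets)
  then have "negligible {x. \<not> P x}" by (simp add: negligible_iff_null_sets)
  then show ?thesis by (rule negligible_subset) auto
qed

lemma completion_ex_borel_measurable_complex: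
  fixes g :: "'a \<Rightarrow> complex"
  assumes "g \<in> borel_measurable (completion M)"
  obtains g' where "g' \<in> borel_measurable M" and "AE x in M. g x = g' x"
proof -
  have "(\<lambda>x. Re (g x)) \<in> borel_measurable (completion M)" using assms by measurable
  then obtain r where r: "r \<in> borel_measurable M" "AE x in M. Re (g x) = r x"
    using completion_ex_borel_measurable_real by blast
  have "(\<lambda>x. Im (g x)) \<in> borel_measurable (completion M)" using assms by measurable
  then obtain i where i: "i \<in> borel_measurable M" "AE x in M. Im (g x) = i x"
    using completion_ex_borel_measurable_real by blast
  show ?thesis
  proof
    show "(\<lambda>x. Complex (r x) (i x)) \<in> borel_measurable M"
      unfolding borel_measurable_complex_iff using r(1) i(1) by simp
    show "AE x in M. g x = Complex (r x) (i x)"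
      using r(2) i(2) by eventually_elim (simp add: complex_eq_iff)
  qed
qed

lemma l2sq_Borel_representative:
  fixes g :: "real \<times> real \<Rightarrow> complex"
  assumes g: "l2sq L g"
  obtains g1 where "g1 \<in> borel_measurable (lborel \<Otimes>\<^sub>M lborel)"
    "AE p in lborel \<Otimes>\<^sub>M lborel. (if p \<in> {0..L} \<times> {0..L} then g p else 0) = g1 p"
    "integrable (lborel \<Otimes>\<^sub>M lborel) (\<lambda>p. (cmod (g1 p))\<^sup>2)"
proof -
  define S where "S = {0..L} \<times> {0..L::real}"
  define g0 where "g0 p = (if p \<in> S then g p else 0)" for p
  have "S \<in> sets borel" unfolding S_def by (intro borel_closed closed_Times) auto
  then have S_lebesgue: "S \<in> sets lebesgue" by simp
  have "g \<in> borel_measurable (lebesgue_on S)"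
    using g measurable_on_iff_borel_measurable[OF S_lebesgue, of g] by (simp add: l2sq_def S_def)
  then have g0_measurable [measurable]: "g0 \<in> borel_measurable lebesgue"
    unfolding g0_def using borel_measurable_if[OF S_lebesgue] by blast
  have "g0 \<in> borel_measurable (completion lborel)" using g0_measurable by simp
  then obtain g1 where g1_measurable [measurable]: "g1 \<in> borel_measurable lborel" and ae: "AE p in lborel. g0 p = g1 p"
    by (rule completion_ex_borel_measurable_complex)
  have [measurable]: "g1 \<in> borel_measurable lebesgue"
    using g1_measurable by (intro measurable_completion) simp
  have "(\<lambda>p. (cmod (g p))\<^sup>2) integrable_on S" using g by (simp add: l2sq_def S_def)
  then have "(\<lambda>p. (cmod (g p))\<^sup>2) absolutely_integrable_on S"
    by (rule nonnegative_absolutely_integrable_1) auto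
  then have "integrable (lebesgue_on S) (\<lambda>p. (cmod (g p))\<^sup>2)"
    using absolutely_integrable_measurable_real[OF S_lebesgue] by (simp add: abs_of_nonneg)
  then have "integrable lebesgue (\<lambda>p. indicator S p *\<^sub>R (cmod (g p))\<^sup>2)"
    by (subst integrable_restrict_space[symmetric]) (auto simp: S_lebesgue)
  also have "(\<lambda>p. indicator S p *\<^sub>R (cmod (g p))\<^sup>2) = (\<lambda>p. (cmod (g0 p))\<^sup>2)"
    by (auto simp: g0_def indicator_def)
  finally have g0_square_integrable: "integrable lebesgue (\<lambda>p. (cmod (g0 p))\<^sup>2)" .
  have "integrable lebesgue (\<lambda>p. (cmod (g1 p))\<^sup>2)"
  proof (subst integrable_cong_AE[symmetric])
    show "(\<lambda>p. (cmod (g0 p))\<^sup>2) \<in> borel_measurable lebesgue" using g0_measurable by measurable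
    show "(\<lambda>p. (cmod (g1 p))\<^sup>2) \<in> borel_measurable lebesgue" using g1_measurable by measurable
    show "AE x in lebesgue. (cmod (g0 x))\<^sup>2 = (cmod (g1 x))\<^sup>2"
      using AE_completion[OF ae] by eventually_elim simp
  qed (rule g0_square_integrable)
  then have g1_square_integrable: "integrable lborel (\<lambda>p. (cmod (g1 p))\<^sup>2)"
    by (subst integrable_completion[symmetric]) (use g1_measurable in auto)
  show ?thesis
  proof (rule that[of g1])
    show "g1 \<in> borel_measurable (lborel \<Otimes>\<^sub>M lborel)" using g1_measurable by (simp add: lborel_prod)
    show "AE p in lborel \<Otimes>\<^sub>M lborel. (if p \<in> {0..L} \<times> {0..L} then g p else 0) = g1 p"
      using ae unfolding lborel_prod g0_def S_def .
    show "integrable (lborel \<Otimes>\<^sub>M lborel) (\<lambda>p. (cmod (g1 p))\<^sup>2)"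
      using g1_square_integrable by (simp add: lborel_prod)
  qed
qed

lemma AE_lborel_swapped_sections:
  fixes P :: "real \<times> real \<Rightarrow> bool"
  assumes "AE p in lborel \<Otimes>\<^sub>M lborel. P p"
  shows "AE x in lborel. AE y in lborel. P (y, x)"
proof -
  obtain N where N: "{p \<in> space (lborel \<Otimes>\<^sub>M lborel). \<not> P p} \<subseteq> N"
    "emeasure (lborel \<Otimes>\<^sub>M lborel) N = 0" "N \<in> sets (lborel \<Otimes>\<^sub>M lborel)"
    using assms by (rule AE_E)
  have "AE p in lborel \<Otimes>\<^sub>M lborel. p \<notin> N"
    by (rule AE_I'[of N]) (use N in auto)
  then have "AE y in lborel. AE x in lborel. (y, x) \<notin> N"
    by (rule lborel_pair.AE_pair)
  then have "AE x in lborel. AE y in lborel. (y, x) \<notin> N"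
  proof (subst lborel_pair.AE_commute[symmetric])
    have "{p \<in> space (lborel \<Otimes>\<^sub>M lborel). (fst p, snd p) \<notin> N} = space (lborel \<Otimes>\<^sub>M lborel) - N"
      by auto
    then show "{p \<in> space (lborel \<Otimes>\<^sub>M lborel). (fst p, snd p) \<notin> N} \<in> sets (lborel \<Otimes>\<^sub>M lborel)"
      using sets.compl_sets[OF N(3)] by metis
  qed
  then show ?thesis
  proof eventually_elim
    case (elim x)
    then show ?case
      by eventually_elim (use N(1) in \<open>auto simp: space_pair_measure\<close>)
  qed
qed

lemma l2sq_Borel_sections:
  fixes g :: "real \<times> real \<Rightarrow> complex"
  assumes g: "l2sq L g"
  obtains g1 :: "real \<times> real \<Rightarrow> complex" and Good :: "real \<Rightarrow> bool" and B :: "real \<Rightarrow> real"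
  where "g1 \<in> borel_measurable (lborel \<Otimes>\<^sub>M lborel)"
    and "negligible {x\<in>{0..L}. \<not> Good x}"
    and "integrable (lebesgue_on {0..L}) B"
    and "\<And>x. Good x \<Longrightarrow> l2 L (\<lambda>y. g1 (y, x))"
    and "\<And>x. Good x \<Longrightarrow> ae_eq L (\<lambda>y. g1 (y, x)) (\<lambda>y. g (y, x))"
    and "\<And>x. Good x \<Longrightarrow> l2_normsq L (\<lambda>y. g1 (y, x)) \<le> B x"
proof -
  obtain g1 where g1 [measurable]: "g1 \<in> borel_measurable (lborel \<Otimes>\<^sub>M lborel)"
    and AE_eq: "AE p in lborel \<Otimes>\<^sub>M lborel. (if p \<in> {0..L} \<times> {0..L} then g p else 0) = g1 p"
    and square_integrable: "integrable (lborel \<Otimes>\<^sub>M lborel) (\<lambda>p. (cmod (g1 p))\<^sup>2)"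
    using l2sq_Borel_representative[OF g] by blast
  have swapped: "integrable (lborel \<Otimes>\<^sub>M lborel) (\<lambda>(x, y). (cmod (g1 (y, x)))\<^sup>2)"
    using lborel_pair.integrable_product_swap[OF square_integrable] by simp
  define B where "B = (\<lambda>x. \<integral>y. (cmod (g1 (y, x)))\<^sup>2 \<partial>lborel)"
  define Good where "Good x \<longleftrightarrow> x \<in> {0..L} \<and> integrable lborel (\<lambda>y. (cmod (g1 (y, x)))\<^sup>2) \<and>
      (AE y in lborel. (if (y, x) \<in> {0..L} \<times> {0..L} then g (y, x) else 0) = g1 (y, x))" for x
  have "AE x in lborel. integrable lborel (\<lambda>y. (cmod (g1 (y, x)))\<^sup>2) \<and>
      (AE y in lborel. (if (y, x) \<in> {0..L} \<times> {0..L} then g (y, x) else 0) = g1 (y, x))"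
    using lborel_pair.AE_integrable_fst'[OF swapped] AE_lborel_swapped_sections[OF AE_eq]
    by eventually_elim simp
  then have negl: "negligible {x\<in>{0..L}. \<not> Good x}"
    by (rule negligible_subset[OF negligible_if_AE_lborel]) (unfold Good_def, blast)
  have B_integrable: "integrable (lebesgue_on {0..L}) B"
    using integrable_lebesgue_on_interval_if_lborel[OF lborel_pair.integrable_fst'[OF swapped]]
    by (simp add: B_def)
  have sections: "l2 L (\<lambda>y. g1 (y, x)) \<and> ae_eq L (\<lambda>y. g1 (y, x)) (\<lambda>y. g (y, x))
      \<and> l2_normsq L (\<lambda>y. g1 (y, x)) \<le> B x" if x: "Good x" for x
  proof (intro conjI)
    have [measurable]: "(\<lambda>y. g1 (y, x)) \<in> borel_measurable lborel" by measurable
    have integrable: "integrable lborel (\<lambda>y. (cmod (g1 (y, x)))\<^sup>2)"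
      using x by (simp add: Good_def)
    show "l2 L (\<lambda>y. g1 (y, x))"
      unfolding l2_iff_integrable
      by (intro conjI borel_measurable_lebesgue_on_of_lborel integrable_lebesgue_on_interval_if_lborel
          integrable) measurable
    show "ae_eq L (\<lambda>y. g1 (y, x)) (\<lambda>y. g (y, x))"
      unfolding ae_eq_def
      by (rule negligible_subset[OF negligible_if_AE_lborel[of "\<lambda>y. (if (y, x) \<in> {0..L} \<times> {0..L}
          then g (y, x) else 0) = g1 (y, x)"]]) (use x in \<open>auto simp: Good_def\<close>)
    have "l2_normsq L (\<lambda>y. g1 (y, x))
        = integral\<^sup>L lborel (\<lambda>y. indicator {0..L} y *\<^sub>R (cmod (g1 (y, x)))\<^sup>2)"
      unfolding l2_normsq_def by (rule integral_lebesgue_on_interval_eq_lborel) measurable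
    also have "\<dots> \<le> B x"
      unfolding B_def
      by (rule integral_mono[OF integrable_mult_indicator[OF _ integrable] integrable])
        (auto simp: indicator_def)
    finally show "l2_normsq L (\<lambda>y. g1 (y, x)) \<le> B x" .
  qed
  show ?thesis
    by (rule that[OF g1 negl B_integrable]) (simp_all add: sections)
qed

lemma kernel_operator_l2:
  assumes g: "l2sq L g" and z: "continuous_on {0..L} z"
  shows "l2 L (\<lambda>x. integral {0..L} (\<lambda>y. cnj (g (y, x)) * z y))"
proof -
  obtain g1 Good B where [measurable]: "g1 \<in> borel_measurable (lborel \<Otimes>\<^sub>M lborel)"
    and negl: "negligible {x\<in>{0..L}. \<not> Good x}"
    and B: "integrable (lebesgue_on {0..L}) B"
    and section_l2: "\<And>x. Good x \<Longrightarrow> l2 L (\<lambda>y. g1 (y, x))"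
    and section_ae: "\<And>x. Good x \<Longrightarrow> ae_eq L (\<lambda>y. g1 (y, x)) (\<lambda>y. g (y, x))"
    and section_bound: "\<And>x. Good x \<Longrightarrow> l2_normsq L (\<lambda>y. g1 (y, x)) \<le> B x"
    by (rule l2sq_Borel_sections[OF g that])
  have l2_z: "l2 L z" by (rule l2_continuous_on[OF z])
  define T where "T x = integral {0..L} (\<lambda>y. cnj (g (y, x)) * z y)" for x
  define zt where "zt y = indicator {0..L} y *\<^sub>R z y" for y
  have [measurable]: "zt \<in> borel_measurable lborel"
    using borel_measurable_continuous_on_indicator[OF _ z] unfolding zt_def by simp
  text \<open>The same operator with the Borel kernel, which is measurable by Fubini.\<close>
  define T1 where "T1 x = integral\<^sup>L lborel (\<lambda>y. zt y * cnj (g1 (y, x)))" for x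
  have T1_measurable [measurable]: "T1 \<in> borel_measurable lborel" unfolding T1_def by measurable
  have good: "T x = T1 x \<and> (cmod (T1 x))\<^sup>2 \<le> l2_normsq L z * B x" if x: "Good x" for x
  proof
    have "T x = l2_inner L z (\<lambda>y. g (y, x))" by (simp add: T_def l2_inner_def mult.commute)
    also have "\<dots> = l2_inner L z (\<lambda>y. g1 (y, x))"
      by (rule l2_inner_ae_eq_right[OF ae_eq_sym[OF section_ae[OF x]]])
    finally have T_inner: "T x = l2_inner L z (\<lambda>y. g1 (y, x))" .
    also have "\<dots> = integral\<^sup>L (lebesgue_on {0..L}) (\<lambda>y. z y * cnj (g1 (y, x)))"
      by (rule l2_inner_eq_lebesgue_integral[OF l2_z section_l2[OF x]])
    also have "\<dots> = integral\<^sup>L (lebesgue_on {0..L}) (\<lambda>y. zt y * cnj (g1 (y, x)))"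
      by (rule Bochner_Integration.integral_cong) (auto simp: zt_def)
    also have "\<dots> = integral\<^sup>L lborel (\<lambda>y. indicator {0..L} y *\<^sub>R (zt y * cnj (g1 (y, x))))"
      by (rule integral_lebesgue_on_interval_eq_lborel) measurable
    also have "\<dots> = T1 x" unfolding T1_def
      by (rule Bochner_Integration.integral_cong) (auto simp: zt_def indicator_def)
    finally show "T x = T1 x" .
    have "cmod (T1 x) \<le> sqrt (l2_normsq L z) * sqrt (l2_normsq L (\<lambda>y. g1 (y, x)))"
      using \<open>T x = T1 x\<close> T_inner l2_Cauchy_Schwarz[OF l2_z section_l2[OF x]] by simp
    then have "(cmod (T1 x))\<^sup>2 \<le> (sqrt (l2_normsq L z * l2_normsq L (\<lambda>y. g1 (y, x))))\<^sup>2"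
      by (intro power_mono) (simp_all add: real_sqrt_mult)
    also have "\<dots> = l2_normsq L z * l2_normsq L (\<lambda>y. g1 (y, x))"
      by simp
    also have "\<dots> \<le> l2_normsq L z * B x"
      by (intro mult_left_mono section_bound[OF x]) simp
    finally show "(cmod (T1 x))\<^sup>2 \<le> l2_normsq L z * B x" .
  qed
  have AE_good: "AE x in lebesgue_on {0..L}. T x = T1 x \<and> (cmod (T1 x))\<^sup>2 \<le> l2_normsq L z * B x"
    unfolding AE_lebesgue_on_interval_iff by (rule negligible_subset[OF negl]) (use good in auto)
  have "l2 L T1"
    unfolding l2_iff_integrable
  proof
    show T1_measurable': "T1 \<in> borel_measurable (lebesgue_on {0..L})"
      by (rule borel_measurable_lebesgue_on_of_lborel[OF T1_measurable])
    show "integrable (lebesgue_on {0..L}) (\<lambda>x. (cmod (T1 x))\<^sup>2)"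
    proof (rule Bochner_Integration.integrable_bound[OF integrable_mult_right[OF B]])
      show "AE x in lebesgue_on {0..L}. norm ((cmod (T1 x))\<^sup>2) \<le> norm (l2_normsq L z * B x)"
        using AE_good by eventually_elim auto
    qed (use T1_measurable' in measurable)
  qed
  moreover have "ae_eq L T1 T"
    using AE_good unfolding ae_eq_iff_AE by eventually_elim simp
  ultimately show ?thesis
    unfolding T_def[abs_def] by (rule l2_ae_eq)
qed

lemma kernel_sections_l2:
  assumes "l2sq L g"
  shows "negligible {x\<in>{0..L}. \<not> l2 L (\<lambda>y. g (y, x))}"
proof -
  obtain g1 Good B where "g1 \<in> borel_measurable (lborel \<Otimes>\<^sub>M lborel)"
    and negl: "negligible {x\<in>{0..L}. \<not> Good x}"
    and "integrable (lebesgue_on {0..L}) B"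
    and section_l2: "\<And>x. Good x \<Longrightarrow> l2 L (\<lambda>y. g1 (y, x))"
    and section_ae: "\<And>x. Good x \<Longrightarrow> ae_eq L (\<lambda>y. g1 (y, x)) (\<lambda>y. g (y, x))"
    and "\<And>x. Good x \<Longrightarrow> l2_normsq L (\<lambda>y. g1 (y, x)) \<le> B x"
    by (rule l2sq_Borel_sections[OF assms that])
  have "l2 L (\<lambda>y. g (y, x))" if "Good x" for x
    by (rule l2_ae_eq[OF section_l2[OF that] section_ae[OF that]])
  then show ?thesis by (auto intro: negligible_subset[OF negl])
qed

lemma Astar_l2:
  assumes g: "l2sq L g" and z: "in_DAs L z h"
  shows "l2 L (Astar L g z h)"
proof -
  have "l2 L (\<lambda>x. - h x + integral {0..L} (\<lambda>y. cnj (g (y, x)) * z y))"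
    using l2_add[OF l2_minus[OF in_DAs_derivative_l2[OF z]]
        kernel_operator_l2[OF g in_DAs_continuous_on[OF z]]]
    by simp
  then show ?thesis by (simp add: Astar_def)
qed

lemma Astar_diff_cmult:
  assumes g: "l2sq L g" and z: "in_DAs L z h" and z0: "in_DAs L z0 h0"
  shows "ae_eq L (Astar L g (\<lambda>x. z x - c * z0 x) (\<lambda>x. h x - c * h0 x))
                 (\<lambda>x. Astar L g z h x - c * Astar L g z0 h0 x)"
proof -
  have lz: "l2 L z" "l2 L z0" using in_DAs_l2 z z0 by auto
  have eq: "integral {0..L} (\<lambda>y. cnj (g (y, x)) * (z y - c * z0 y))
      = integral {0..L} (\<lambda>y. cnj (g (y, x)) * z y) - c * integral {0..L} (\<lambda>y. cnj (g (y, x)) * z0 y)"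
    if x: "l2 L (\<lambda>y. g (y, x))" for x
  proof -
    have e: "integral {0..L} (\<lambda>y. cnj (g (y, x)) * u y) = l2_inner L u (\<lambda>y. g (y, x))" for u
      by (simp add: l2_inner_def mult.commute)
    show ?thesis
      using l2_inner_linear_left[OF lz(1) lz(2) x, of 1 "-c"] unfolding e by simp
  qed
  show ?thesis
    unfolding ae_eq_def
    by (rule negligible_subset[OF kernel_sections_l2[OF g]])
      (auto simp: Astar_def eq, auto simp: algebra_simps)
qed

section \<open>The boundary correction\<close>

lemma form_adjoint_zero:
  assumes "form_adjoint L \<Gamma> \<Gamma>s"
  shows "ae_eq L (\<Gamma>s 0) (\<lambda>x. 0)"
proof -
  have "l2 L (\<Gamma>s 0)" using assms by (simp add: form_adjoint_def)
  moreover have "l2_inner L (\<Gamma>s 0) (\<Gamma>s 0) = 0"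
    using assms \<open>l2 L (\<Gamma>s 0)\<close> unfolding form_adjoint_def by (metis complex_cnj_zero mult_zero_right)
  ultimately show ?thesis by (rule l2_ae_zero_if_inner_self_eq_0)
qed

lemma bounded_form_inner:
  assumes "l2 L \<gamma>"
  shows "bounded_form L (\<lambda>f. l2_inner L f \<gamma>)"
  unfolding bounded_form_def
proof (intro conjI allI impI exI)
  show "l2_inner L (\<lambda>x. a * f x + b * g x) \<gamma> = a * l2_inner L f \<gamma> + b * l2_inner L g \<gamma>"
    if "l2 L f \<and> l2 L g" for f g a b
    using that l2_inner_linear_left[OF _ _ assms] by blast
  show "cmod (l2_inner L f \<gamma>) \<le> sqrt (l2_normsq L \<gamma>) * l2_norm L f" if "l2 L f" for f
    using l2_Cauchy_Schwarz[OF that assms] by (simp add: l2_norm_eq_sqrt_normsq that mult.commute)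
qed

lemma form_adjoint_inner:
  assumes "l2 L \<gamma>"
  shows "form_adjoint L (\<lambda>f. l2_inner L f \<gamma>) (\<lambda>c x. c * \<gamma> x)"
  unfolding form_adjoint_def
  using l2_cmult[OF assms] l2_inner_linear_right[OF assms assms, of _ _ 0]
  by (simp add: mult.commute)

lemma adjoint_relation_on_kernel:
  assumes P: "bounded_op L P" and A: "op_adjoint L P Ps" and \<Gamma>: "form_adjoint L \<Gamma> \<Gamma>s"
    and relation: "ae_eq L (\<lambda>x. - k x) (\<lambda>x. Ps (Astar L g z h) x + Ps (\<Gamma>s (z L)) x)"
    and "z L = 0"
  shows "ae_eq L (\<lambda>x. - k x - Ps (Astar L g z h) x) (\<lambda>x. 0)"
proof -
  have Ps: "bounded_op L Ps" by (rule op_adjoint_bounded_op[OF P A])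
  have "l2 L (\<Gamma>s 0)" using \<Gamma> by (simp add: form_adjoint_def)
  have "ae_eq L (Ps (\<Gamma>s 0)) (Ps (\<lambda>x. 0))"
    by (rule bounded_op_ae_eq[OF Ps \<open>l2 L (\<Gamma>s 0)\<close> form_adjoint_zero[OF \<Gamma>]])
  also have "ae_eq L \<dots> (\<lambda>x. 0)"
    by (rule bounded_op_zero[OF Ps])
  finally have "ae_eq L (Ps (\<Gamma>s 0)) (\<lambda>x. 0)" .
  with relation show ?thesis
    unfolding ae_eq_iff_AE \<open>z L = 0\<close> by eventually_elim simp
qed

lemma adjoint_relation_from_kernel:
  assumes g: "l2sq L g" and P: "bounded_op L P" and A: "op_adjoint L P Ps"
    and kernel: "\<And>z h w k. in_DAs L z h \<Longrightarrow> z L = 0 \<Longrightarrow> in_DAs L w k \<Longrightarrow> ae_eq L (Ps z) w \<Longrightarrow>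
      ae_eq L (\<lambda>x. - k x - Ps (Astar L g z h) x) (\<lambda>x. 0)"
    and z0: "in_DAs L z0 h0" "z0 L = 1" and w0: "in_DAs L w0 k0" "ae_eq L (Ps z0) w0"
    and \<gamma>: "l2 L \<gamma>" "ae_eq L (Ps \<gamma>) (\<lambda>x. - k0 x - Ps (Astar L g z0 h0) x)"
    and z: "in_DAs L z h" and w: "in_DAs L w k" and zw: "ae_eq L (Ps z) w"
  shows "ae_eq L (\<lambda>x. - k x) (\<lambda>x. Ps (Astar L g z h) x + Ps (\<lambda>x. z L * \<gamma> x) x)"
proof -
  define c where "c = z L"
  have "ae_eq L (Ps (\<lambda>x. 1 * z x + (- c) * z0 x)) (\<lambda>x. 1 * Ps z x + (- c) * Ps z0 x)"
    by (rule op_adjoint_linear[OF P A in_DAs_l2[OF z] in_DAs_l2[OF z0(1)]])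
  then have "ae_eq L (Ps (\<lambda>x. z x - c * z0 x)) (\<lambda>x. w x - c * w0 x)"
    using zw w0(2) unfolding ae_eq_iff_AE by simp (elim AE_mp, auto intro!: AE_I2)
  then have reduced: "ae_eq L (\<lambda>x. - (k x - c * k0 x)
      - Ps (Astar L g (\<lambda>x. z x - c * z0 x) (\<lambda>x. h x - c * h0 x)) x) (\<lambda>x. 0)"
    using kernel[OF in_DAs_diff_cmult[OF z z0(1)] _ in_DAs_diff_cmult[OF w w0(1)]] z0(2)
    by (simp add: c_def)
  have Astar_z: "l2 L (Astar L g z h)" and Astar_z0: "l2 L (Astar L g z0 h0)"
    using Astar_l2[OF g] z z0(1) by auto
  have "ae_eq L (Ps (Astar L g (\<lambda>x. z x - c * z0 x) (\<lambda>x. h x - c * h0 x)))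
      (Ps (\<lambda>x. 1 * Astar L g z h x + (- c) * Astar L g z0 h0 x))"
    using bounded_op_ae_eq[OF op_adjoint_bounded_op[OF P A]
        Astar_l2[OF g in_DAs_diff_cmult[OF z z0(1)]] Astar_diff_cmult[OF g z z0(1)]]
    by simp
  also have "ae_eq L \<dots> (\<lambda>x. 1 * Ps (Astar L g z h) x + (- c) * Ps (Astar L g z0 h0) x)"
    by (rule op_adjoint_linear[OF P A Astar_z Astar_z0])
  finally have linear: "ae_eq L (Ps (Astar L g (\<lambda>x. z x - c * z0 x) (\<lambda>x. h x - c * h0 x)))
      (\<lambda>x. Ps (Astar L g z h) x - c * Ps (Astar L g z0 h0) x)"
    by simp
  have "ae_eq L (Ps (\<lambda>x. c * \<gamma> x + 0 * \<gamma> x)) (\<lambda>x. c * Ps \<gamma> x + 0 * Ps \<gamma> x)"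
    by (rule op_adjoint_linear[OF P A \<gamma>(1) \<gamma>(1)])
  then have scaled: "ae_eq L (Ps (\<lambda>x. c * \<gamma> x)) (\<lambda>x. c * Ps \<gamma> x)"
    by simp
  let ?A = "Ps (Astar L g z h)" and ?B = "Ps (Astar L g z0 h0)"
    and ?C = "Ps (Astar L g (\<lambda>x. z x - c * z0 x) (\<lambda>x. h x - c * h0 x))"
  show ?thesis
    using reduced linear \<gamma>(2) scaled unfolding ae_eq_iff_AE c_def[symmetric]
  proof eventually_elim
    case (elim x)
    have k: "k x = - ?C x + c * k0 x" using elim(1) by (simp add: algebra_simps)
    have A: "?A x = ?C x + c * ?B x" using elim(2) unfolding eq_diff_eq by (rule sym)
    have \<gamma>: "Ps \<gamma> x = - k0 x - ?B x" using elim(3) by (simp add: algebra_simps)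
    show ?case unfolding k A elim(4) \<gamma> by (simp add: algebra_simps)
  qed
qed

theorem proposition2:
  fixes L :: real and g :: "real \<times> real \<Rightarrow> complex"
    and P Ps :: "(real \<Rightarrow> complex) \<Rightarrow> (real \<Rightarrow> complex)"
  assumes "L > 0"
    and "l2sq L g"
    and "bounded_op L P"
    and "op_adjoint L P Ps"
    and "invertible_op L P"
    and "\<forall>z h. in_DAs L z h \<longrightarrow> (\<exists>w k. in_DAs L w k \<and> ae_eq L (Ps z) w)"
  shows "(\<exists>\<Gamma> \<Gamma>s. bounded_form L \<Gamma> \<and> form_adjoint L \<Gamma> \<Gamma>s \<and>
            (\<forall>z h w k. in_DAs L z h \<and> in_DAs L w k \<and> ae_eq L (Ps z) w \<longrightarrow>
               ae_eq L (\<lambda>x. - k x) (\<lambda>x. Ps (Astar L g z h) x + Ps (\<Gamma>s (z L)) x)))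
         \<longleftrightarrow>
         (\<forall>z h w k. in_DAs L z h \<and> z L = 0 \<and> in_DAs L w k \<and> ae_eq L (Ps z) w \<longrightarrow>
               ae_eq L (\<lambda>x. - k x - Ps (Astar L g z h) x) (\<lambda>x. 0))"
  (is "?relation \<longleftrightarrow> ?kernel")
proof
  assume ?relation
  then obtain \<Gamma> \<Gamma>s where "form_adjoint L \<Gamma> \<Gamma>s"
    and relation: "\<And>z h w k. in_DAs L z h \<Longrightarrow> in_DAs L w k \<Longrightarrow> ae_eq L (Ps z) w \<Longrightarrow>
      ae_eq L (\<lambda>x. - k x) (\<lambda>x. Ps (Astar L g z h) x + Ps (\<Gamma>s (z L)) x)"
    by blast
  show ?kernel
    using relation adjoint_relation_on_kernel[OF assms(3,4) \<open>form_adjoint L \<Gamma> \<Gamma>s\<close>] by blast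
next
  assume ?kernel
  note ramp = in_DAs_ramp[OF assms(1)]
  obtain w0 k0 where w0: "in_DAs L w0 k0" "ae_eq L (Ps (\<lambda>x. of_real (x / L))) w0"
    using assms(6) ramp by blast
  have "l2 L (\<lambda>x. - k0 x - Ps (Astar L g (\<lambda>x. of_real (x / L)) (\<lambda>x. of_real (1 / L))) x)"
    by (rule l2_diff[OF l2_minus[OF in_DAs_derivative_l2[OF w0(1)]]
          op_adjoint_l2[OF assms(4) Astar_l2[OF assms(2) ramp]]])
  then obtain \<gamma> where "l2 L \<gamma>" and \<gamma>: "ae_eq L (Ps \<gamma>)
      (\<lambda>x. - k0 x - Ps (Astar L g (\<lambda>x. of_real (x / L)) (\<lambda>x. of_real (1 / L))) x)"
    by (rule op_adjoint_surj[OF assms(3-5)])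
  show ?relation
    using adjoint_relation_from_kernel[OF assms(2-4) _ ramp _ w0 \<open>l2 L \<gamma>\<close> \<gamma>]
      \<open>?kernel\<close> assms(1) bounded_form_inner[OF \<open>l2 L \<gamma>\<close>] form_adjoint_inner[OF \<open>l2 L \<gamma>\<close>]
    by (intro exI[of _ "\<lambda>f. l2_inner L f \<gamma>"] exI[of _ "\<lambda>c x. c * \<gamma> x"]) auto
qed

end
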